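(* If $\langle P\mid\Gamma\rangle$ is correct and $\langle P\mid\Gamma\rangle\sim\langle P'\mid\Gamma\rangle$, then $\langle P'\mid\Gamma\rangle$ is also correct.
   Context: Write ⅋ for par. A pre-proof graph $\langle P\mid\Gamma\rangle$ is an MLL linking tree $P$ (generated by $\mathsf1\mid a\otimes a^\perp\mid a^\perp\otimes a\mid\bot\otimes L\mid L\otimes\bot\mid L⅋L$) together with a sequent $\Gamma$ of MLL formulas whose leaves coincide with those of $P$. A switching deletes, at each ⅋-node, one of its two child edges; the graph is correct if all switchings are connected and acyclic. The relation $\sim$ is the smallest equivalence on pre-proof graphs with $P[Q⅋R]\sim P[R⅋Q]$, $P[(Q⅋R)⅋S]\sim P[Q⅋(R⅋S)]$, $P[Q\otimes R]\sim P[R\otimes Q]$, $P[\bot_i\otimes(Q\otimes\bot_j)]\sim P[(\bot_i\otimes Q)\otimes\bot_j]$, and $P[Q⅋(R\otimes\bot_i)]\sim P[(Q⅋R)\otimes\bot_i]$, the last only if in every extended switching of the left side with respect to $\bot_i$ (a switching with the edge between $\bot_i$ and its parent also removed) no node of $Q$ is connected to $\bot_i$. *)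

theory Defs
  imports Main
begin

text \<open>Leaves carry a label (occurrence name) of type 'l; atoms carry an atom name of type 'a.
  Pos a l is the atom a, Neg a l is the dual atom a-perp, One l the unit 1, Bot l the unit bottom.\<close>
datatype ('a, 'l) lf = Pos 'a 'l | Neg 'a 'l | One 'l | Bot 'l

datatype 'x tr = Leaf 'x | Tens "'x tr" "'x tr" | Par "'x tr" "'x tr"

type_synonym ('a, 'l) form = "('a, 'l) lf tr"

fun lbl :: "('a, 'l) lf \<Rightarrow> 'l" where
  "lbl (Pos a l) = l" | "lbl (Neg a l) = l" | "lbl (One l) = l" | "lbl (Bot l) = l"

fun leaves :: "'x tr \<Rightarrow> 'x list" where
  "leaves (Leaf x) = [x]"
| "leaves (Tens A B) = leaves A @ leaves B"
| "leaves (Par A B) = leaves A @ leaves B"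

inductive linking :: "('a, 'l) form \<Rightarrow> bool" where
  lk_one: "linking (Leaf (One l))"
| lk_ax1: "linking (Tens (Leaf (Pos a l)) (Leaf (Neg a m)))"
| lk_ax2: "linking (Tens (Leaf (Neg a l)) (Leaf (Pos a m)))"
| lk_botl: "linking Q \<Longrightarrow> linking (Tens (Leaf (Bot l)) Q)"
| lk_botr: "linking Q \<Longrightarrow> linking (Tens Q (Leaf (Bot l)))"
| lk_par: "linking Q \<Longrightarrow> linking R \<Longrightarrow> linking (Par Q R)"

definition pre_proof_graph :: "('a, 'l) form \<Rightarrow> ('a, 'l) form list \<Rightarrow> bool" where
  "pre_proof_graph P \<Gamma> \<longleftrightarrow> linking P
     \<and> distinct (map lbl (leaves P))
     \<and> distinct (map lbl (concat (map leaves \<Gamma>)))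
     \<and> set (leaves P) = set (concat (map leaves \<Gamma>))"

text \<open>Positions are paths; False = left child, True = right child.\<close>
fun subtree_at :: "'x tr \<Rightarrow> bool list \<Rightarrow> 'x tr option" where
  "subtree_at t [] = Some t"
| "subtree_at (Leaf x) (d # p) = None"
| "subtree_at (Tens A B) (d # p) = subtree_at (if d then B else A) p"
| "subtree_at (Par A B) (d # p) = subtree_at (if d then B else A) p"

text \<open>replace_at t p u is the context t[ ] at position p filled with u.\<close>
fun replace_at :: "'x tr \<Rightarrow> bool list \<Rightarrow> 'x tr \<Rightarrow> 'x tr" where
  "replace_at t [] u = u"
| "replace_at (Leaf x) (d # p) u = Leaf x"
| "replace_at (Tens A B) (d # p) u =
     (if d then Tens A (replace_at B p u) else Tens (replace_at A p u) B)"
| "replace_at (Par A B) (d # p) u =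
     (if d then Par A (replace_at B p u) else Par (replace_at A p u) B)"

text \<open>Nodes: internal nodes of P (by position), internal nodes of the k-th formula of Gamma
  (by index and position), and leaves, which are shared between P and Gamma (by label).\<close>
datatype 'l node = PN "bool list" | GN nat "bool list" | LN 'l

definition pnode :: "('a, 'l) form \<Rightarrow> bool list \<Rightarrow> 'l node" where
  "pnode P p = (case subtree_at P p of Some (Leaf x) \<Rightarrow> LN (lbl x) | _ \<Rightarrow> PN p)"

definition gnode :: "('a, 'l) form list \<Rightarrow> nat \<Rightarrow> bool list \<Rightarrow> 'l node" where
  "gnode \<Gamma> k p = (case subtree_at (\<Gamma> ! k) p of Some (Leaf x) \<Rightarrow> LN (lbl x) | _ \<Rightarrow> GN k p)"

definition vertices :: "('a, 'l) form \<Rightarrow> ('a, 'l) form list \<Rightarrow> 'l node set" where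
  "vertices P \<Gamma> = {pnode P p | p. subtree_at P p \<noteq> None}
     \<union> {gnode \<Gamma> k p | k p. k < length \<Gamma> \<and> subtree_at (\<Gamma> ! k) p \<noteq> None}"

text \<open>Parent-child edges of the graph, as tuples (parent, side, child, parent is a par node).\<close>
definition tedges :: "('a, 'l) form \<Rightarrow> ('a, 'l) form list \<Rightarrow> ('l node \<times> bool \<times> 'l node \<times> bool) set" where
  "tedges P \<Gamma> =
     {(PN p, d, pnode P (p @ [d]), False) | p d A B. subtree_at P p = Some (Tens A B)}
   \<union> {(PN p, d, pnode P (p @ [d]), True) | p d A B. subtree_at P p = Some (Par A B)}
   \<union> {(GN k p, d, gnode \<Gamma> k (p @ [d]), False) | k p d A B.
        k < length \<Gamma> \<and> subtree_at (\<Gamma> ! k) p = Some (Tens A B)}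
   \<union> {(GN k p, d, gnode \<Gamma> k (p @ [d]), True) | k p d A B.
        k < length \<Gamma> \<and> subtree_at (\<Gamma> ! k) p = Some (Par A B)}"

text \<open>A switching s: at each par node u, the child edge on side s u is deleted.\<close>
definition sw_edges :: "('a, 'l) form \<Rightarrow> ('a, 'l) form list \<Rightarrow> ('l node \<Rightarrow> bool) \<Rightarrow> 'l node set set" where
  "sw_edges P \<Gamma> s = {{u, v} | u d v par. (u, d, v, par) \<in> tedges P \<Gamma> \<and> \<not> (par \<and> s u = d)}"

fun is_PN :: "'l node \<Rightarrow> bool" where
  "is_PN (PN p) = True" | "is_PN _ = False"

text \<open>Extended switching with respect to bot_i: additionally the edge between the leaf bot_i and
  its parent in the linking tree P is removed.\<close>
definition ext_sw_edges :: "('a, 'l) form \<Rightarrow> ('a, 'l) form list \<Rightarrow> ('l node \<Rightarrow> bool) \<Rightarrow> 'l \<Rightarrow> 'l node set set" where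
  "ext_sw_edges P \<Gamma> s i = {{u, v} | u d v par. (u, d, v, par) \<in> tedges P \<Gamma> \<and> \<not> (par \<and> s u = d)
       \<and> \<not> (is_PN u \<and> v = LN i)}"

definition adj :: "'v set set \<Rightarrow> 'v \<Rightarrow> 'v \<Rightarrow> bool" where
  "adj E u v \<longleftrightarrow> {u, v} \<in> E"

definition gconnected :: "'v set \<Rightarrow> 'v set set \<Rightarrow> bool" where
  "gconnected V E \<longleftrightarrow> (\<forall>u\<in>V. \<forall>v\<in>V. (adj E)\<^sup>*\<^sup>* u v)"

text \<open>A cycle is a list of at least three distinct vertices, consecutive ones adjacent and the
  last adjacent to the first (the graphs considered here have no loops or multiple edges).\<close>
definition gacyclic :: "'v set set \<Rightarrow> bool" where
  "gacyclic E \<longleftrightarrow> \<not> (\<exists>cs. length cs \<ge> 3 \<and> distinct cs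
       \<and> (\<forall>j. Suc j < length cs \<longrightarrow> adj E (cs ! j) (cs ! Suc j))
       \<and> adj E (last cs) (hd cs))"

definition correct :: "('a, 'l) form \<Rightarrow> ('a, 'l) form list \<Rightarrow> bool" where
  "correct P \<Gamma> \<longleftrightarrow> pre_proof_graph P \<Gamma>
     \<and> (\<forall>s. gconnected (vertices P \<Gamma>) (sw_edges P \<Gamma> s) \<and> gacyclic (sw_edges P \<Gamma> s))"

inductive sim_step :: "('a, 'l) form list \<Rightarrow> ('a, 'l) form \<Rightarrow> ('a, 'l) form \<Rightarrow> bool"
  for \<Gamma> :: "('a, 'l) form list" where
  par_comm: "subtree_at P p = Some (Par Q R) \<Longrightarrow>
     sim_step \<Gamma> P (replace_at P p (Par R Q))"
| par_assoc: "subtree_at P p = Some (Par (Par Q R) S) \<Longrightarrow>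
     sim_step \<Gamma> P (replace_at P p (Par Q (Par R S)))"
| tens_comm: "subtree_at P p = Some (Tens Q R) \<Longrightarrow>
     sim_step \<Gamma> P (replace_at P p (Tens R Q))"
| bot_assoc: "subtree_at P p = Some (Tens (Leaf (Bot i)) (Tens Q (Leaf (Bot j)))) \<Longrightarrow>
     sim_step \<Gamma> P (replace_at P p (Tens (Tens (Leaf (Bot i)) Q) (Leaf (Bot j))))"
| bot_switch: "subtree_at P p = Some (Par Q (Tens R (Leaf (Bot i)))) \<Longrightarrow>
     (\<forall>s q. subtree_at P (p @ [False] @ q) \<noteq> None \<longrightarrow>
        \<not> (adj (ext_sw_edges P \<Gamma> s i))\<^sup>*\<^sup>* (pnode P (p @ [False] @ q)) (LN i)) \<Longrightarrow>
     sim_step \<Gamma> P (replace_at P p (Tens (Par Q R) (Leaf (Bot i))))"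

definition ppg_step :: "(('a, 'l) form \<times> ('a, 'l) form list) \<Rightarrow> (('a, 'l) form \<times> ('a, 'l) form list) \<Rightarrow> bool" where
  "ppg_step G G' \<longleftrightarrow> (case (G, G') of ((P, \<Gamma>), (P', \<Gamma>')) \<Rightarrow>
     \<Gamma>' = \<Gamma> \<and> pre_proof_graph P \<Gamma> \<and> pre_proof_graph P' \<Gamma> \<and> sim_step \<Gamma> P P')"

definition sim :: "(('a, 'l) form \<times> ('a, 'l) form list) \<Rightarrow> (('a, 'l) form \<times> ('a, 'l) form list) \<Rightarrow> bool" where
  "sim = (\<lambda>G G'. ppg_step G G' \<or> ppg_step G' G)\<^sup>*\<^sup>*"

end

theory Submission
  imports Defs "HOL-Library.Transitive_Closure_Table"
begin

text \<open>Correctness says that every switching graph is a spanning tree; for graphs without loops,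
  acyclicity means that every edge is a bridge. A rewrite step at position \<open>p\<close> only changes the
  edges at the one or two internal nodes \<open>x\<close>, \<open>y\<close> of the redex. After relabelling positions so
  that the unchanged subformulas keep their nodes, the switching graphs before and after the step
  share all other edges, and these outer edges do not depend on the switches at \<open>x\<close> and \<open>y\<close>. It
  therefore suffices to compare, for a fixed outer graph, the few local configurations.
  The commutations change nothing. For the two associativities, removing the inner node \<open>y\<close> (a leaf
  or a subdivision vertex) and sliding edges along tree edges shows that both sides require the same
  trees. For the \<open>\<bottom>\<close>-switch, removing \<open>y\<close> leaves an outer graph with three components, containing
  \<open>x\<close>, \<open>\<bottom>\<^sub>i\<close> and the root of \<open>R\<close>; the backward direction holds outright, and the forward
  direction is exactly where the side condition of the rule is needed: it keeps the root of \<open>Q\<close>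
  out of the component of \<open>\<bottom>\<^sub>i\<close>.\<close>

section \<open>Spanning trees\<close>

abbreviation reach :: "'v set set \<Rightarrow> 'v \<Rightarrow> 'v \<Rightarrow> bool" where
  "reach E \<equiv> (adj E)\<^sup>*\<^sup>*"

lemma adj_commute: "adj E u v \<longleftrightarrow> adj E v u"
  by (simp add: adj_def insert_commute)

lemma reach_sym: "reach E u v \<Longrightarrow> reach E v u"
proof (induction rule: rtranclp_induct)
  case (step v w)
  then show ?case by (metis adj_commute converse_rtranclp_into_rtranclp)
qed simp

lemma reach_mono: "reach E u v \<Longrightarrow> E \<subseteq> E' \<Longrightarrow> reach E' u v"
  by (erule rtranclp_mono[THEN predicate2D, rotated]) (auto simp: adj_def)

lemma reach_edge: "{u, v} \<in> E \<Longrightarrow> reach E u v"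
  by (simp add: adj_def r_into_rtranclp)

lemma reach_step: "reach E u v \<Longrightarrow> {v, w} \<in> E \<Longrightarrow> reach E u w"
  by (simp add: adj_def rtranclp.rtrancl_into_rtrancl)

lemma reach_fresh: "reach E u v \<Longrightarrow> v \<notin> \<Union>E \<Longrightarrow> u = v"
proof (induction rule: converse_rtranclp_induct)
  case (step u w)
  then show ?case by (auto simp: adj_def)
qed simp

lemma reach_insert_cases:
  assumes "reach (insert {a, b} E) u v"
  shows "reach E u v \<or> (reach E u a \<and> reach E b v) \<or> (reach E u b \<and> reach E a v)"
  using assms
proof (induction rule: rtranclp_induct)
  case (step v w)
  show ?case
  proof (cases "{v, w} \<in> E")
    case True
    with step.IH show ?thesis by (meson reach_step)
  next
    case False
    with step.hyps(2) have "(v = a \<and> w = b) \<or> (v = b \<and> w = a)"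
      by (auto simp: adj_def doubleton_eq_iff)
    with step.IH show ?thesis by auto
  qed
qed simp

lemma reach_Un_exit:
  assumes "reach (E \<union> F) u v"
  shows "reach E u v \<or> (\<exists>w\<in>\<Union>F. reach E u w)"
  using assms
proof (induction rule: rtranclp_induct)
  case (step v w)
  then consider "{v, w} \<in> E" | "{v, w} \<in> F" by (auto simp: adj_def)
  then show ?case using step.IH by cases (blast intro: reach_step)+
qed simp

definition proper_edges :: "'v set set \<Rightarrow> bool" where
  "proper_edges E \<longleftrightarrow> (\<forall>e\<in>E. \<exists>u v. u \<noteq> v \<and> e = {u, v})"

definition all_bridges :: "'v set set \<Rightarrow> bool" where
  "all_bridges E \<longleftrightarrow> (\<forall>u v. {u, v} \<in> E \<longrightarrow> \<not> reach (E - {{u, v}}) u v)"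

definition spanning_tree :: "'v set \<Rightarrow> 'v set set \<Rightarrow> bool" where
  "spanning_tree V E \<longleftrightarrow> gconnected V E \<and> all_bridges E \<and> proper_edges E"

lemma rtrancl_path_chain:
  "rtrancl_path r x ys y \<Longrightarrow>
     (\<forall>j. Suc j < length (x # ys) \<longrightarrow> r ((x # ys) ! j) ((x # ys) ! Suc j)) \<and> last (x # ys) = y"
  by (induction rule: rtrancl_path.induct) (auto simp: nth_Cons split: nat.splits)

lemma chain_reach:
  assumes "\<forall>j. Suc j < length cs \<longrightarrow> adj E (cs ! j) (cs ! Suc j)"
    and "1 \<le> i" "i < length cs"
    and "\<forall>j. 1 \<le> j \<longrightarrow> Suc j < length cs \<longrightarrow> {cs ! j, cs ! Suc j} \<noteq> e"
  shows "reach (E - {e}) (cs ! 1) (cs ! i)"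
  using assms(2,3)
proof (induction i rule: dec_induct)
  case (step n)
  then have "adj (E - {e}) (cs ! n) (cs ! Suc n)"
    using assms(1,4) by (simp add: adj_def)
  with step show ?case by (meson Suc_lessD rtranclp.rtrancl_into_rtrancl)
qed simp

lemma gacyclic_if_all_bridges:
  assumes "all_bridges E"
  shows "gacyclic E"
  unfolding gacyclic_def
proof
  assume "\<exists>cs. 3 \<le> length cs \<and> distinct cs \<and> (\<forall>j. Suc j < length cs \<longrightarrow> adj E (cs ! j) (cs ! Suc j))
      \<and> adj E (last cs) (hd cs)"
  then obtain cs where len: "3 \<le> length cs" and d: "distinct cs"
    and ch: "\<forall>j. Suc j < length cs \<longrightarrow> adj E (cs ! j) (cs ! Suc j)" and lh: "adj E (last cs) (hd cs)"
    by blast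
  define e where "e = {cs ! 0, cs ! 1}"
  have "e \<in> E" using ch len by (simp add: e_def adj_def)
  have len01: "0 < length cs" "1 < length cs" using len by linarith+
  have "cs ! Suc j \<notin> e" if "1 \<le> j" "Suc j < length cs" for j
    using d that len01 by (auto simp: e_def nth_eq_iff_index_eq)
  then have "\<forall>j. 1 \<le> j \<longrightarrow> Suc j < length cs \<longrightarrow> {cs ! j, cs ! Suc j} \<noteq> e"
    by blast
  then have "reach (E - {e}) (cs ! 1) (cs ! (length cs - 1))"
    using chain_reach[OF ch] len by simp
  moreover have "cs ! (length cs - 1) \<notin> e"
    using d len len01 by (auto simp: e_def nth_eq_iff_index_eq)
  then have "{cs ! (length cs - 1), cs ! 0} \<noteq> e" by blast
  then have "adj (E - {e}) (cs ! (length cs - 1)) (cs ! 0)"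
    using lh len01 by (simp add: adj_def last_conv_nth hd_conv_nth)
  ultimately have "reach (E - {e}) (cs ! 1) (cs ! 0)" by (rule rtranclp.rtrancl_into_rtrancl)
  with assms \<open>e \<in> E\<close> show False unfolding all_bridges_def e_def by (metis reach_sym)
qed

lemma all_bridges_if_gacyclic:
  assumes "gacyclic E" "proper_edges E"
  shows "all_bridges E"
  unfolding all_bridges_def
proof (intro allI impI notI)
  fix u v assume uv: "{u, v} \<in> E" and "reach (E - {{u, v}}) u v"
  have "u \<noteq> v" using uv assms(2) unfolding proper_edges_def by (metis doubleton_eq_iff insert_absorb2)
  from \<open>reach (E - {{u, v}}) u v\<close> obtain ys where p: "rtrancl_path (adj (E - {{u, v}})) u ys v"
    and "distinct (u # ys)"
    by (metis rtranclp_eq_rtrancl_path rtrancl_path_distinct)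
  from rtrancl_path_chain[OF p]
  have ch: "\<forall>j. Suc j < length (u # ys) \<longrightarrow> adj (E - {{u, v}}) ((u # ys) ! j) ((u # ys) ! Suc j)"
    and l: "last (u # ys) = v" by auto
  have "ys \<noteq> []" using l \<open>u \<noteq> v\<close> by auto
  moreover have "ys \<noteq> [v]"
    using ch[rule_format, of 0] by (auto simp: adj_def)
  ultimately have "length (u # ys) \<ge> 3"
    using l by (cases ys; cases "tl ys"; auto)
  moreover have "\<forall>j. Suc j < length (u # ys) \<longrightarrow> adj E ((u # ys) ! j) ((u # ys) ! Suc j)"
    using ch by (auto simp: adj_def)
  moreover have "adj E (last (u # ys)) (hd (u # ys))" using l uv by (simp add: adj_def insert_commute)
  ultimately show False using assms(1) \<open>distinct (u # ys)\<close> unfolding gacyclic_def by blast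
qed

lemma gacyclic_iff_all_bridges: "proper_edges E \<Longrightarrow> gacyclic E \<longleftrightarrow> all_bridges E"
  using gacyclic_if_all_bridges all_bridges_if_gacyclic by blast

lemma proper_edges_insert: "proper_edges (insert {a, b} E) \<longleftrightarrow> a \<noteq> b \<and> proper_edges E"
  unfolding proper_edges_def by (auto simp: doubleton_eq_iff)

lemma all_bridges_insert:
  assumes "{a, b} \<notin> E"
  shows "all_bridges (insert {a, b} E) \<longleftrightarrow> all_bridges E \<and> \<not> reach E a b"
proof
  assume ab: "all_bridges (insert {a, b} E)"
  have "\<not> reach (E - {{c, d}}) c d" if "{c, d} \<in> E" for c d
    using ab that reach_mono[of "E - {{c, d}}" c d "insert {a, b} E - {{c, d}}"]
    unfolding all_bridges_def by blast
  moreover have "insert {a, b} E - {{a, b}} = E" using assms by blast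
  ultimately show "all_bridges E \<and> \<not> reach E a b"
    using ab unfolding all_bridges_def by (metis insertI1)
next
  assume E: "all_bridges E \<and> \<not> reach E a b"
  show "all_bridges (insert {a, b} E)" unfolding all_bridges_def
  proof (intro allI impI notI)
    fix c d assume cd: "{c, d} \<in> insert {a, b} E" and r: "reach (insert {a, b} E - {{c, d}}) c d"
    show False
    proof (cases "{c, d} = {a, b}")
      case True
      then have "reach E c d" using reach_mono[OF r] by blast
      with True E show False by (metis doubleton_eq_iff reach_sym)
    next
      case False
      then have "{c, d} \<in> E" "insert {a, b} E - {{c, d}} = insert {a, b} (E - {{c, d}})"
        using cd by auto
      moreover have "reach E a b"
        if "reach (E - {{c, d}}) c a \<and> reach (E - {{c, d}}) b d
          \<or> reach (E - {{c, d}}) c b \<and> reach (E - {{c, d}}) a d"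
        using that reach_edge[OF \<open>{c, d} \<in> E\<close>] reach_mono[of "E - {{c, d}}" _ _ E]
        by (meson Diff_subset reach_sym rtranclp_trans)
      ultimately show False
        using reach_insert_cases[of a b "E - {{c, d}}" c d] r E unfolding all_bridges_def by auto
    qed
  qed
qed

lemma spanning_tree_exchange:
  assumes T: "spanning_tree V T" and "{u, w} \<in> T"
    and au: "reach (T - {{u, w}}) a u" and bw: "reach (T - {{u, w}}) b w"
  shows "spanning_tree V (insert {a, b} (T - {{u, w}}))"
proof -
  define T0 where "T0 = T - {{u, w}}"
  have T_eq: "T = insert {u, w} T0" "{u, w} \<notin> T0" using \<open>{u, w} \<in> T\<close> by (auto simp: T0_def)
  have "all_bridges T0" "\<not> reach T0 u w"
    using T all_bridges_insert[OF T_eq(2)] unfolding spanning_tree_def T_eq(1) by auto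
  then have nab: "\<not> reach T0 a b"
    using au bw unfolding T0_def by (meson reach_sym rtranclp_trans)
  then have ab: "{a, b} \<notin> T0" "a \<noteq> b" by (auto intro: reach_edge)
  have uw: "reach (insert {a, b} T0) u w"
    using reach_mono[OF reach_sym[OF au]] reach_edge[of a b] reach_mono[OF bw]
    unfolding T0_def by (meson insertI1 rtranclp_trans subset_insertI)
  have edge: "reach (insert {a, b} T0) x z" if xz: "{x, z} \<in> T" for x z
  proof (cases "{x, z} = {u, w}")
    case True
    then show ?thesis using uw reach_sym[OF uw] by (auto simp: doubleton_eq_iff)
  next
    case False
    with xz have "{x, z} \<in> insert {a, b} T0" by (simp add: T0_def)
    then show ?thesis by (rule reach_edge)
  qed
  have "reach (insert {a, b} T0) x z" if "reach T x z" for x z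
    using that by (induction rule: rtranclp_induct) (auto simp: adj_def[of T] intro: rtranclp_trans edge)
  then have "gconnected V (insert {a, b} T0)"
    using T unfolding spanning_tree_def gconnected_def by blast
  moreover have "proper_edges T0"
    using T unfolding spanning_tree_def T_eq(1) proper_edges_def by blast
  ultimately show ?thesis
    unfolding spanning_tree_def T0_def[symmetric]
    using all_bridges_insert[OF ab(1)] \<open>all_bridges T0\<close> nab ab(2) by (simp add: proper_edges_insert)
qed

lemma spanning_tree_slide:
  assumes "{x, z} \<notin> E" "{y, z} \<notin> E" "x \<noteq> z" "y \<noteq> z"
  shows "spanning_tree V (insert {x, y} (insert {x, z} E)) \<longleftrightarrow> spanning_tree V (insert {x, y} (insert {y, z} E))"
proof -
  have slide: "spanning_tree V (insert {x', y'} (insert {y', z} E))"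
    if "spanning_tree V (insert {x', y'} (insert {x', z} E))" "{x', z} \<notin> E" "y' \<noteq> z" for x' y'
  proof -
    have "insert {x', y'} (insert {x', z} E) - {{x', z}} = insert {x', y'} E"
      using that(2,3) by (auto simp: doubleton_eq_iff)
    with spanning_tree_exchange[OF that(1), of x' z y' z]
    show ?thesis by (simp add: reach_edge insert_commute)
  qed
  show ?thesis
    using slide[of x y] slide[of y x] assms by (auto simp: insert_commute)
qed

lemma gconnected_insert_fresh:
  assumes fresh: "y \<notin> \<Union>E" and "u \<in> V" "u \<noteq> y"
  shows "gconnected V (insert {y, u} E) \<longleftrightarrow> gconnected (V - {y}) E"
proof
  assume conn: "gconnected V (insert {y, u} E)"
  have "reach E w z" if w: "w \<in> V - {y}" and z: "z \<in> V - {y}" for w z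
  proof -
    have "reach (insert {y, u} E) w z" using conn w z by (auto simp: gconnected_def)
    moreover have "\<not> reach E w y" using reach_fresh[OF _ fresh] w by blast
    moreover have "\<not> reach E y z" using reach_fresh[OF reach_sym fresh] z by blast
    ultimately show ?thesis by (meson reach_insert_cases)
  qed
  then show "gconnected (V - {y}) E" unfolding gconnected_def by blast
next
  assume conn: "gconnected (V - {y}) E"
  have to_u: "reach (insert {y, u} E) w u" if "w \<in> V" for w
  proof (cases "w = y")
    case True
    then show ?thesis by (simp add: reach_edge)
  next
    case False
    with that assms(2,3) conn have "reach E w u" unfolding gconnected_def by blast
    then show ?thesis by (rule reach_mono) blast
  qed
  show "gconnected V (insert {y, u} E)"
    unfolding gconnected_def by (metis to_u reach_sym rtranclp_trans)
qed

lemma spanning_tree_insert_leaf: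
  assumes "y \<notin> \<Union>E" "u \<in> V" "u \<noteq> y"
  shows "spanning_tree V (insert {y, u} E) \<longleftrightarrow> spanning_tree (V - {y}) E"
proof -
  have "{y, u} \<notin> E" using assms(1) by blast
  moreover have "\<not> reach E y u" using reach_fresh[OF reach_sym[of E y u] assms(1)] assms(3) by blast
  ultimately show ?thesis
    unfolding spanning_tree_def
    by (simp add: gconnected_insert_fresh[OF assms] all_bridges_insert proper_edges_insert assms(3)[symmetric])
qed

lemma spanning_tree_subdivide:
  assumes "y \<notin> \<Union>E" "u \<in> V" "u \<noteq> y" "w \<noteq> y" "u \<noteq> w" "{u, w} \<notin> E"
  shows "spanning_tree V (insert {u, y} (insert {y, w} E)) \<longleftrightarrow> spanning_tree (V - {y}) (insert {u, w} E)"
proof -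
  have "{u, y} = {y, u}" by blast
  moreover have "spanning_tree V (insert {y, u} (insert {y, w} E))
      \<longleftrightarrow> spanning_tree V (insert {y, u} (insert {u, w} E))"
    using assms by (intro spanning_tree_slide) auto
  moreover have "spanning_tree V (insert {y, u} (insert {u, w} E)) \<longleftrightarrow> spanning_tree (V - {y}) (insert {u, w} E)"
    using assms by (intro spanning_tree_insert_leaf) auto
  ultimately show ?thesis by simp
qed

definition edge_image :: "('v \<Rightarrow> 'w) \<Rightarrow> 'v set set \<Rightarrow> 'w set set" where
  "edge_image f E = (\<lambda>e. f ` e) ` E"

lemma edge_image_member:
  assumes "inj f"
  shows "{x, y} \<in> edge_image f E \<longleftrightarrow> (\<exists>u v. x = f u \<and> y = f v \<and> {u, v} \<in> E)"
proof
  assume "{x, y} \<in> edge_image f E"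
  then obtain e where "e \<in> E" "{x, y} = f ` e" unfolding edge_image_def by blast
  moreover from this obtain u v where "u \<in> e" "v \<in> e" "x = f u" "y = f v" by (metis imageE insertI1 insertI2)
  ultimately have "f ` e = f ` {u, v}" by auto
  with \<open>e \<in> E\<close> \<open>x = f u\<close> \<open>y = f v\<close> show "\<exists>u v. x = f u \<and> y = f v \<and> {u, v} \<in> E"
    using inj_image_eq_iff[OF assms] by metis
next
  assume "\<exists>u v. x = f u \<and> y = f v \<and> {u, v} \<in> E"
  then show "{x, y} \<in> edge_image f E" unfolding edge_image_def by (auto intro: image_eqI[rotated])
qed

lemma adj_edge_image: "inj f \<Longrightarrow> adj (edge_image f E) (f u) (f v) \<longleftrightarrow> adj E u v"
  by (auto simp: adj_def edge_image_member dest: injD)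

lemma reach_edge_image_range:
  assumes "reach (edge_image f E) x z" "inj f" "x = f u"
  shows "\<exists>v. z = f v \<and> reach E u v"
  using assms(1)
proof (induction rule: rtranclp_induct)
  case (step y z)
  then obtain v where v: "y = f v" "reach E u v" by blast
  with step.hyps(2) obtain w where "z = f w" "adj E v w"
    using assms(2) unfolding adj_def by (auto simp: edge_image_member dest: injD)
  with v show ?case by (blast intro: rtranclp.rtrancl_into_rtrancl)
qed (use assms(3) in blast)

lemma reach_edge_image: "inj f \<Longrightarrow> reach (edge_image f E) (f u) (f v) \<longleftrightarrow> reach E u v"
proof
  assume "inj f" "reach (edge_image f E) (f u) (f v)"
  then show "reach E u v" using reach_edge_image_range by (metis injD)
next
  assume f: "inj f" and uv: "reach E u v"
  from uv show "reach (edge_image f E) (f u) (f v)"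
    by (induction rule: rtranclp_induct) (auto simp: adj_edge_image[OF f] intro: rtranclp.rtrancl_into_rtrancl)
qed

lemma edge_image_Diff: "inj f \<Longrightarrow> edge_image f E - {{f u, f v}} = edge_image f (E - {{u, v}})"
  unfolding edge_image_def using inj_image_eq_iff[of f _ "{u, v}"] by auto

lemma proper_edges_edge_image:
  assumes f: "inj f"
  shows "proper_edges (edge_image f E) \<longleftrightarrow> proper_edges E"
proof
  assume img: "proper_edges (edge_image f E)"
  show "proper_edges E" unfolding proper_edges_def
  proof
    fix e assume "e \<in> E"
    then have "f ` e \<in> edge_image f E" unfolding edge_image_def by blast
    then obtain x y where "x \<noteq> y" "{x, y} = f ` e"
      using img unfolding proper_edges_def by metis
    moreover from this obtain u v where "u \<in> e" "v \<in> e" "x = f u" "y = f v"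
      by (metis imageE insertI1 insertI2)
    ultimately have "f ` e = f ` {u, v}" "u \<noteq> v" by auto
    then show "\<exists>u v. u \<noteq> v \<and> e = {u, v}" using inj_image_eq_iff[OF f, of e "{u, v}"] by blast
  qed
next
  assume E: "proper_edges E"
  show "proper_edges (edge_image f E)" unfolding proper_edges_def
  proof
    fix e' assume "e' \<in> edge_image f E"
    then obtain u v where "e' = {f u, f v}" "u \<noteq> v" "{u, v} \<in> E"
      using E unfolding edge_image_def proper_edges_def by force
    then show "\<exists>x y. x \<noteq> y \<and> e' = {x, y}" using injD[OF f, of u v] by blast
  qed
qed

lemma all_bridges_edge_image:
  assumes f: "inj f"
  shows "all_bridges (edge_image f E) \<longleftrightarrow> all_bridges E"
proof -
  have diff: "reach (edge_image f E - {{f u, f v}}) (f u) (f v) \<longleftrightarrow> reach (E - {{u, v}}) u v" for u v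
    by (simp add: edge_image_Diff[OF f] reach_edge_image[OF f])
  have mem: "{f u, f v} \<in> edge_image f E \<longleftrightarrow> {u, v} \<in> E" for u v
    using f by (auto simp: edge_image_member dest: injD)
  show ?thesis unfolding all_bridges_def
  proof (intro iffI allI impI)
    fix u v assume h: "\<forall>x y. {x, y} \<in> edge_image f E \<longrightarrow> \<not> reach (edge_image f E - {{x, y}}) x y"
      and "{u, v} \<in> E"
    then show "\<not> reach (E - {{u, v}}) u v" using h[rule_format, of "f u" "f v"] mem diff by simp
  next
    fix x y assume h: "\<forall>u v. {u, v} \<in> E \<longrightarrow> \<not> reach (E - {{u, v}}) u v"
      and "{x, y} \<in> edge_image f E"
    then obtain u v where "x = f u" "y = f v" "{u, v} \<in> E" using edge_image_member[OF f] by blast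
    then show "\<not> reach (edge_image f E - {{x, y}}) x y" using h diff by simp
  qed
qed

lemma spanning_tree_edge_image:
  assumes f: "inj f"
  shows "spanning_tree (f ` V) (edge_image f E) \<longleftrightarrow> spanning_tree V E"
  unfolding spanning_tree_def gconnected_def
  by (simp add: reach_edge_image[OF f] all_bridges_edge_image[OF f] proper_edges_edge_image[OF f])

subsection \<open>Local configurations of the rewrite steps\<close>

text \<open>After deleting the inner node \<open>y\<close>, which is a leaf or subdivides an edge, every switching
  on either side leaves one of the same three trees.\<close>
lemma par_assoc_local_trees:
  assumes fresh: "y \<notin> \<Union>E" and "x \<noteq> y" "a \<noteq> y" "b \<noteq> y" "c \<noteq> y" "x \<noteq> a" "x \<noteq> b" "x \<noteq> c"
    and "{x, a} \<notin> E" "{x, b} \<notin> E" "{x, c} \<notin> E" "x \<in> V" "a \<in> V" "b \<in> V" "c \<in> V"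
  shows "(\<forall>\<alpha> \<beta>. spanning_tree V (E \<union> {if \<alpha> then {x, y} else {x, c}, if \<beta> then {y, a} else {y, b}}))
      \<longleftrightarrow> (\<forall>z\<in>{a, b, c}. spanning_tree (V - {y}) (insert {x, z} E))"
    and "(\<forall>\<alpha> \<beta>. spanning_tree V (E \<union> {if \<alpha> then {x, a} else {x, y}, if \<beta> then {y, b} else {y, c}}))
      \<longleftrightarrow> (\<forall>z\<in>{a, b, c}. spanning_tree (V - {y}) (insert {x, z} E))"
proof -
  have leaf: "spanning_tree V (insert {x, z} (insert {y, u} E)) \<longleftrightarrow> spanning_tree (V - {y}) (insert {x, z} E)"
    if "u \<in> {a, b, c}" "z \<in> {a, b, c}" for u z
    using spanning_tree_insert_leaf[of y "insert {x, z} E" u V] fresh that assms(2-5,12-15)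
    by (auto simp: insert_commute)
  have subdivide: "spanning_tree V (insert {x, y} (insert {y, z} E)) \<longleftrightarrow> spanning_tree (V - {y}) (insert {x, z} E)"
    if "z \<in> {a, b, c}" for z
    using spanning_tree_subdivide[of y E x V z] that assms by auto
  show "(\<forall>\<alpha> \<beta>. spanning_tree V (E \<union> {if \<alpha> then {x, y} else {x, c}, if \<beta> then {y, a} else {y, b}}))
      \<longleftrightarrow> (\<forall>z\<in>{a, b, c}. spanning_tree (V - {y}) (insert {x, z} E))"
    by (simp add: all_bool_eq leaf subdivide)
  show "(\<forall>\<alpha> \<beta>. spanning_tree V (E \<union> {if \<alpha> then {x, a} else {x, y}, if \<beta> then {y, b} else {y, c}}))
      \<longleftrightarrow> (\<forall>z\<in>{a, b, c}. spanning_tree (V - {y}) (insert {x, z} E))"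
    by (simp add: all_bool_eq leaf subdivide)
qed

lemma bot_assoc_local_trees:
  assumes "y \<notin> \<Union>E" "{x, u} \<notin> E" "{x, w} \<notin> E"
    and "x \<noteq> y" "x \<noteq> u" "x \<noteq> w" "y \<noteq> u" "y \<noteq> w" "u \<noteq> w" "a \<noteq> u" "a \<noteq> w"
  shows "spanning_tree V (E \<union> {{x, u}, {x, y}, {y, a}, {y, w}})
    \<longleftrightarrow> spanning_tree V (E \<union> {{x, y}, {x, w}, {y, u}, {y, a}})"
proof -
  have "spanning_tree V (insert {x, y} (insert {x, u} (insert {y, a} (insert {y, w} E))))
      \<longleftrightarrow> spanning_tree V (insert {x, y} (insert {y, u} (insert {y, a} (insert {y, w} E))))"
    using assms by (intro spanning_tree_slide) (auto simp: doubleton_eq_iff)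
  also have "insert {x, y} (insert {y, u} (insert {y, a} (insert {y, w} E)))
      = insert {y, x} (insert {y, w} (insert {y, u} (insert {y, a} E)))"
    by (auto simp: insert_commute)
  also have "spanning_tree V (insert {y, x} (insert {y, w} (insert {y, u} (insert {y, a} E))))
      \<longleftrightarrow> spanning_tree V (insert {y, x} (insert {x, w} (insert {y, u} (insert {y, a} E))))"
    using assms by (intro spanning_tree_slide) (auto simp: doubleton_eq_iff)
  finally show ?thesis by (simp add: insert_commute)
qed

lemma bot_switch_local_trees_before:
  assumes fresh: "y \<notin> \<Union>E" and E: "{x, a} \<notin> E" "{x, b} \<notin> E" "{x, t} \<notin> E"
    and "x \<noteq> y" "a \<noteq> y" "b \<noteq> y" "t \<noteq> y" "x \<noteq> a" "x \<noteq> b" "x \<noteq> t" "b \<noteq> t" "x \<in> V" "b \<in> V"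
  shows "(\<forall>\<alpha>. spanning_tree V (E \<union> {if \<alpha> then {x, a} else {x, y}, {y, b}, {y, t}}))
    \<longleftrightarrow> spanning_tree (V - {y}) (insert {x, t} (insert {x, b} E))
      \<and> spanning_tree (V - {y}) (insert {x, a} (insert {b, t} E))"
proof -
  have "{y, t} \<notin> insert {y, b} E" "{x, t} \<notin> insert {y, b} E"
    using assms by (auto simp: doubleton_eq_iff)
  then have "spanning_tree V (insert {y, x} (insert {y, t} (insert {y, b} E)))
      \<longleftrightarrow> spanning_tree V (insert {y, x} (insert {x, t} (insert {y, b} E)))"
    using assms by (intro spanning_tree_slide) auto
  also have "insert {y, x} (insert {x, t} (insert {y, b} E)) = insert {x, y} (insert {y, b} (insert {x, t} E))"
    by blast
  also have "spanning_tree V (insert {x, y} (insert {y, b} (insert {x, t} E)))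
      \<longleftrightarrow> spanning_tree (V - {y}) (insert {x, b} (insert {x, t} E))"
    using assms by (intro spanning_tree_subdivide) (auto simp: doubleton_eq_iff)
  also have "insert {x, b} (insert {x, t} E) = insert {x, t} (insert {x, b} E)" by blast
  also have "insert {y, x} (insert {y, t} (insert {y, b} E)) = E \<union> {{x, y}, {y, b}, {y, t}}" by blast
  finally have y_inner: "spanning_tree V (E \<union> {{x, y}, {y, b}, {y, t}})
      \<longleftrightarrow> spanning_tree (V - {y}) (insert {x, t} (insert {x, b} E))" .
  have "{b, t} \<notin> E" if "spanning_tree (V - {y}) (insert {x, t} (insert {x, b} E))"
  proof
    assume "{b, t} \<in> E"
    then have "reach (insert {x, b} E) x t" by (meson insertI1 insertI2 reach_edge reach_step)
    moreover have xt: "{x, t} \<notin> insert {x, b} E" using assms by (auto simp: doubleton_eq_iff)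
    have "\<not> reach (insert {x, b} E) x t"
      using that all_bridges_insert[OF xt] unfolding spanning_tree_def by simp
    ultimately show False by contradiction
  qed
  moreover have "spanning_tree V (E \<union> {{x, a}, {y, b}, {y, t}})
      \<longleftrightarrow> spanning_tree (V - {y}) (insert {x, a} (insert {b, t} E))" if "{b, t} \<notin> E"
  proof -
    have "E \<union> {{x, a}, {y, b}, {y, t}} = insert {b, y} (insert {y, t} (insert {x, a} E))" by blast
    moreover have "spanning_tree V (insert {b, y} (insert {y, t} (insert {x, a} E)))
        \<longleftrightarrow> spanning_tree (V - {y}) (insert {b, t} (insert {x, a} E))"
      using assms that by (intro spanning_tree_subdivide) (auto simp: doubleton_eq_iff)
    moreover have "insert {b, t} (insert {x, a} E) = insert {x, a} (insert {b, t} E)" by blast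
    ultimately show ?thesis by simp
  qed
  ultimately show ?thesis using y_inner unfolding all_bool_eq by auto
qed

lemma bot_switch_local_trees_after:
  assumes fresh: "y \<notin> \<Union>E" and "{x, a} \<notin> E" "{x, b} \<notin> E" "{x, t} \<notin> E"
    and "x \<noteq> y" "a \<noteq> y" "b \<noteq> y" "t \<noteq> y" "x \<noteq> a" "x \<noteq> b" "x \<noteq> t" "a \<noteq> t" "b \<noteq> t" "x \<in> V"
  shows "(\<forall>\<beta>. spanning_tree V (E \<union> {{x, y}, {x, t}, if \<beta> then {y, a} else {y, b}}))
    \<longleftrightarrow> spanning_tree (V - {y}) (insert {x, t} (insert {x, a} E))
      \<and> spanning_tree (V - {y}) (insert {x, t} (insert {x, b} E))"
proof -
  have "spanning_tree V (insert {x, y} (insert {y, z} (insert {x, t} E)))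
      \<longleftrightarrow> spanning_tree (V - {y}) (insert {x, z} (insert {x, t} E))" if "z \<in> {a, b}" for z
    using assms that by (intro spanning_tree_subdivide) (auto simp: doubleton_eq_iff)
  moreover have "E \<union> {{x, y}, {x, t}, {y, z}} = insert {x, y} (insert {y, z} (insert {x, t} E))"
    "insert {x, z} (insert {x, t} E) = insert {x, t} (insert {x, z} E)" for z
    by blast+
  ultimately show ?thesis by (simp add: all_bool_eq)
qed

text \<open>In both lemmas \<open>E\<close> has three components, containing \<open>x\<close>, \<open>b\<close> and \<open>t\<close>, and the tree
  containing \<open>{x, a}\<close> keeps \<open>a\<close> out of the component of \<open>x\<close>. Backwards the first tree, forwards
  the hypothesis, keeps it out of that of \<open>t\<close>; so \<open>a\<close> lies in the component of \<open>b\<close> and a single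
  exchange gives the new tree.\<close>
lemma bot_switch_backward_tree:
  assumes T1: "spanning_tree V (insert {x, t} (insert {x, a} E))"
    and T2: "spanning_tree V (insert {x, t} (insert {x, b} E))"
    and "{x, t} \<notin> E" "{x, a} \<notin> E" "a \<noteq> t" "a \<in> V" "x \<in> V"
  shows "spanning_tree V (insert {x, a} (insert {b, t} E))"
proof -
  have xt: "{x, t} \<notin> insert {x, a} E" using assms(3-5) by (auto simp: doubleton_eq_iff)
  then have "all_bridges (insert {x, a} E)" "\<not> reach (insert {x, a} E) x t"
    using T1 all_bridges_insert[OF xt] unfolding spanning_tree_def by auto
  then have "\<not> reach E x a" "\<not> reach E a t"
    using all_bridges_insert[OF assms(4)] reach_edge[of x a "insert {x, a} E"]
      reach_mono[of E a t "insert {x, a} E"] by (auto intro: rtranclp_trans)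
  moreover have "reach (E \<union> {{x, t}, {x, b}}) a x"
    using T2 assms(6,7) unfolding spanning_tree_def gconnected_def by (simp add: insert_commute)
  ultimately have "reach E a b"
    using reach_Un_exit[of E "{{x, t}, {x, b}}" a x] reach_sym[of E a x] by auto
  then have "reach (insert {x, a} E) b x"
    using reach_mono[of E b a] reach_sym reach_edge[of a x] by (metis insert_commute insertI1 rtranclp_trans subset_insertI)
  moreover have "insert {x, t} (insert {x, a} E) - {{x, t}} = insert {x, a} E" using xt by blast
  ultimately show ?thesis
    using spanning_tree_exchange[OF T1, of x t b t] by (simp add: insert_commute)
qed

lemma bot_switch_forward_tree:
  assumes S1: "spanning_tree V (insert {x, a} (insert {b, t} E))"
    and S2: "spanning_tree V (insert {x, t} (insert {x, b} E))"
    and "\<not> reach E a t"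
    and "{x, a} \<notin> E" "{x, b} \<notin> E" "a \<noteq> t" "b \<noteq> t" "x \<noteq> t" "a \<in> V" "x \<in> V"
  shows "spanning_tree V (insert {x, t} (insert {x, a} E))"
proof -
  have xa: "{x, a} \<notin> insert {b, t} E" using assms(4,6,8) by (auto simp: doubleton_eq_iff)
  then have "\<not> reach E x a"
    using S1 all_bridges_insert[OF xa] reach_mono[of E x a "insert {b, t} E"]
    unfolding spanning_tree_def by blast
  moreover have "reach (E \<union> {{x, t}, {x, b}}) a x"
    using S2 assms(9,10) unfolding spanning_tree_def gconnected_def by (simp add: insert_commute)
  ultimately have "reach E a b"
    using reach_Un_exit[of E "{{x, t}, {x, b}}" a x] reach_sym[of E a x] assms(3) by auto
  then have "reach (insert {x, t} E) a b" by (rule reach_mono) blast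
  moreover have "insert {x, t} (insert {x, b} E) - {{x, b}} = insert {x, t} E"
    using assms(5,7) by (auto simp: doubleton_eq_iff)
  ultimately show ?thesis
    using spanning_tree_exchange[OF S2, of x b x a] by (simp add: insert_commute)
qed

section \<open>The switching graphs of a pre-proof graph, subtree by subtree\<close>

type_synonym 'l tedge = "'l node \<times> bool \<times> 'l node \<times> bool"

text \<open>In \<open>root_node\<close>, \<open>node_at\<close>, \<open>tree_edges\<close> and \<open>tree_nodes\<close> the first argument is the
  position at which the subtree \<open>t\<close> sits in the linking tree; \<open>node_at c t q\<close> is the node at
  position \<open>q\<close> relative to it.\<close>
fun root_node :: "bool list \<Rightarrow> ('a, 'l) form \<Rightarrow> 'l node" where
  "root_node c (Leaf x) = LN (lbl x)"
| "root_node c (Tens A B) = PN c"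
| "root_node c (Par A B) = PN c"

definition node_at :: "bool list \<Rightarrow> ('a, 'l) form \<Rightarrow> bool list \<Rightarrow> 'l node" where
  "node_at c t q = (case subtree_at t q of Some (Leaf x) \<Rightarrow> LN (lbl x) | _ \<Rightarrow> PN (c @ q))"

fun tree_edges :: "bool list \<Rightarrow> ('a, 'l) form \<Rightarrow> 'l tedge set" where
  "tree_edges c (Leaf x) = {}"
| "tree_edges c (Tens A B) =
     {(PN c, False, root_node (c @ [False]) A, False), (PN c, True, root_node (c @ [True]) B, False)}
     \<union> tree_edges (c @ [False]) A \<union> tree_edges (c @ [True]) B"
| "tree_edges c (Par A B) =
     {(PN c, False, root_node (c @ [False]) A, True), (PN c, True, root_node (c @ [True]) B, True)}
     \<union> tree_edges (c @ [False]) A \<union> tree_edges (c @ [True]) B"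

fun tree_nodes :: "bool list \<Rightarrow> ('a, 'l) form \<Rightarrow> 'l node set" where
  "tree_nodes c (Leaf x) = {LN (lbl x)}"
| "tree_nodes c (Tens A B) = {PN c} \<union> tree_nodes (c @ [False]) A \<union> tree_nodes (c @ [True]) B"
| "tree_nodes c (Par A B) = {PN c} \<union> tree_nodes (c @ [False]) A \<union> tree_nodes (c @ [True]) B"

lemma ex_position: "(\<exists>q. P q) \<longleftrightarrow> P [] \<or> (\<exists>q. P (False # q)) \<or> (\<exists>q. P (True # q))"
  by (metis (full_types) list.exhaust)

lemma node_at_Nil: "node_at c t [] = root_node c t"
  by (cases t) (auto simp: node_at_def)

lemma node_at_Cons:
  "node_at c (Tens A B) (d # q) = node_at (c @ [d]) (if d then B else A) q"
  "node_at c (Par A B) (d # q) = node_at (c @ [d]) (if d then B else A) q"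
  by (auto simp: node_at_def split: option.splits tr.splits)

lemma tree_edges_member:
  "(u, d, v, par) \<in> tree_edges c t \<longleftrightarrow> (\<exists>q A B. u = PN (c @ q) \<and> v = node_at c t (q @ [d])
     \<and> (subtree_at t q = Some (Tens A B) \<and> \<not> par \<or> subtree_at t q = Some (Par A B) \<and> par))"
proof (induction t arbitrary: c)
  case (Leaf x)
  then show ?case by (auto elim: subtree_at.elims)
next
  case (Tens A B)
  show ?case by (subst ex_position) (auto simp: Tens.IH node_at_Cons node_at_Nil)
next
  case (Par A B)
  show ?case by (subst ex_position) (auto simp: Par.IH node_at_Cons node_at_Nil)
qed

lemma tree_nodes_member: "v \<in> tree_nodes c t \<longleftrightarrow> (\<exists>q. subtree_at t q \<noteq> None \<and> v = node_at c t q)"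
proof (induction t arbitrary: c)
  case (Leaf x)
  then show ?case by (subst ex_position) (auto simp: node_at_def)
next
  case (Tens A B)
  show ?case by (subst ex_position) (auto simp: Tens.IH node_at_Cons node_at_Nil)
next
  case (Par A B)
  show ?case by (subst ex_position) (auto simp: Par.IH node_at_Cons node_at_Nil)
qed

definition nonleaf :: "'x tr \<Rightarrow> bool" where
  "nonleaf t \<longleftrightarrow> (\<forall>x. t \<noteq> Leaf x)"

text \<open>The edges and nodes of \<open>t\<close> outside the subtree at relative position \<open>p\<close>; the node
  at \<open>p\<close> itself is included as a child but not as a node.\<close>
fun context_edges :: "bool list \<Rightarrow> ('a, 'l) form \<Rightarrow> bool list \<Rightarrow> 'l tedge set" where
  "context_edges c t [] = {}"
| "context_edges c (Leaf x) (d # p) = {}"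
| "context_edges c (Tens A B) (d # p) =
     {(PN c, False, if d then root_node (c @ [False]) A else PN (c @ [False]), False),
      (PN c, True, if d then PN (c @ [True]) else root_node (c @ [True]) B, False)}
     \<union> (if d then tree_edges (c @ [False]) A \<union> context_edges (c @ [True]) B p
        else context_edges (c @ [False]) A p \<union> tree_edges (c @ [True]) B)"
| "context_edges c (Par A B) (d # p) =
     {(PN c, False, if d then root_node (c @ [False]) A else PN (c @ [False]), True),
      (PN c, True, if d then PN (c @ [True]) else root_node (c @ [True]) B, True)}
     \<union> (if d then tree_edges (c @ [False]) A \<union> context_edges (c @ [True]) B p
        else context_edges (c @ [False]) A p \<union> tree_edges (c @ [True]) B)"

fun context_nodes :: "bool list \<Rightarrow> ('a, 'l) form \<Rightarrow> bool list \<Rightarrow> 'l node set" where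
  "context_nodes c t [] = {}"
| "context_nodes c (Leaf x) (d # p) = {}"
| "context_nodes c (Tens A B) (d # p) = {PN c}
     \<union> (if d then tree_nodes (c @ [False]) A \<union> context_nodes (c @ [True]) B p
        else context_nodes (c @ [False]) A p \<union> tree_nodes (c @ [True]) B)"
| "context_nodes c (Par A B) (d # p) = {PN c}
     \<union> (if d then tree_nodes (c @ [False]) A \<union> context_nodes (c @ [True]) B p
        else context_nodes (c @ [False]) A p \<union> tree_nodes (c @ [True]) B)"

lemma root_node_nonleaf: "subtree_at A q = Some X \<Longrightarrow> nonleaf X \<Longrightarrow> root_node c A = PN c"
  by (cases q; cases A) (auto simp: nonleaf_def)

lemma tree_edges_split:
  "subtree_at t p = Some X \<Longrightarrow> nonleaf X \<Longrightarrow> tree_edges c t = context_edges c t p \<union> tree_edges (c @ p) X"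
  by (induction t p arbitrary: c rule: subtree_at.induct) (auto simp: root_node_nonleaf)

lemma tree_nodes_split:
  "subtree_at t p = Some X \<Longrightarrow> tree_nodes c t = context_nodes c t p \<union> tree_nodes (c @ p) X"
  by (induction t p arbitrary: c rule: subtree_at.induct) auto

lemma context_edges_replace_at:
  "subtree_at t p = Some X \<Longrightarrow> context_edges c (replace_at t p Y) p = context_edges c t p"
  by (induction t p arbitrary: c rule: subtree_at.induct) auto

lemma context_nodes_replace_at:
  "subtree_at t p = Some X \<Longrightarrow> context_nodes c (replace_at t p Y) p = context_nodes c t p"
  by (induction t p arbitrary: c rule: subtree_at.induct) auto

lemma subtree_at_replace_at: "subtree_at t p = Some X \<Longrightarrow> subtree_at (replace_at t p Y) p = Some Y"
  by (induction t p rule: subtree_at.induct) auto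

lemma subtree_at_append: "subtree_at t p = Some X \<Longrightarrow> subtree_at t (p @ r) = subtree_at X r"
  by (induction t p rule: subtree_at.induct) auto

lemma root_node_cases: "root_node c t = PN c \<or> (\<exists>l. root_node c t = LN l)"
  by (cases t) auto

lemma root_node_in_tree_nodes: "root_node c t \<in> tree_nodes c t"
  by (cases t) auto

text \<open>Leaves count as both inside and outside every subtree, since they are shared with the
  sequent.\<close>
definition inside :: "bool list \<Rightarrow> 'l node \<Rightarrow> bool" where
  "inside c n = (case n of PN q \<Rightarrow> (\<exists>r. q = c @ r) | GN k q \<Rightarrow> False | LN l \<Rightarrow> True)"

definition outside :: "bool list \<Rightarrow> 'l node \<Rightarrow> bool" where
  "outside c n = (case n of PN q \<Rightarrow> \<not> (\<exists>r. q = c @ r) | GN k q \<Rightarrow> True | LN l \<Rightarrow> True)"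

lemma inside_root_node: "inside c (root_node c t)"
  by (cases t) (auto simp: inside_def)

lemma inside_append: "inside (c @ r) n \<Longrightarrow> inside c n"
  by (auto simp: inside_def split: node.splits)

lemma inside_sibling: "inside (c @ [d]) n \<Longrightarrow> d \<noteq> e \<Longrightarrow> outside (c @ e # p) n"
  by (auto simp: inside_def outside_def split: node.splits)

lemma inside_node_at: "inside c (node_at c t q)"
  by (auto simp: node_at_def inside_def split: option.split tr.split)

lemma tree_edges_inside: "(u, d, v, par) \<in> tree_edges c t \<Longrightarrow> inside c u \<and> inside c v"
  by (auto simp: tree_edges_member inside_node_at) (simp_all add: inside_def)

lemma tree_nodes_inside: "n \<in> tree_nodes c t \<Longrightarrow> inside c n"
  by (auto simp: tree_nodes_member inside_node_at)

lemma outside_parent: "outside (c @ e # p) (PN c)"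
  by (simp add: outside_def)

lemma outside_child: "PN (c @ [e]) = PN (c @ e # p) \<or> outside (c @ e # p) (PN (c @ [e]))"
  by (cases p) (auto simp: outside_def)

lemma context_edges_outside:
  "(u, d, v, par) \<in> context_edges c t p \<Longrightarrow> outside (c @ p) u \<and> (v = PN (c @ p) \<or> outside (c @ p) v)"
proof (induction c t p rule: context_edges.induct)
  case (3 c A B e p)
  then show ?case
    using outside_parent[of c e p] outside_child[of c e p]
      inside_sibling[OF inside_root_node[of "c @ [False]" A], of e p]
      inside_sibling[OF inside_root_node[of "c @ [True]" B], of e p]
    by (cases e) (auto dest: tree_edges_inside inside_sibling)
next
  case (4 c A B e p)
  then show ?case
    using outside_parent[of c e p] outside_child[of c e p]
      inside_sibling[OF inside_root_node[of "c @ [False]" A], of e p]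
      inside_sibling[OF inside_root_node[of "c @ [True]" B], of e p]
    by (cases e) (auto dest: tree_edges_inside inside_sibling)
qed auto

lemma context_nodes_outside: "n \<in> context_nodes c t p \<Longrightarrow> outside (c @ p) n"
proof (induction c t p rule: context_nodes.induct)
  case (3 c A B e p)
  then show ?case using tree_nodes_inside inside_sibling
    by (cases e) (fastforce simp: outside_def)+
next
  case (4 c A B e p)
  then show ?case using tree_nodes_inside inside_sibling
    by (cases e) (fastforce simp: outside_def)+
qed auto

lemma root_node_LN: "root_node c t = LN l \<Longrightarrow> l \<in> lbl ` set (leaves t)"
  by (cases t) auto

lemma distinct_labels_subtree:
  "distinct (map lbl (leaves t)) \<Longrightarrow> subtree_at t p = Some X \<Longrightarrow> distinct (map lbl (leaves X))"
  by (induction t p rule: subtree_at.induct) (auto split: if_splits)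

lemma leaf_in_leaves: "subtree_at t r = Some (Leaf x) \<Longrightarrow> x \<in> set (leaves t)"
  by (induction t r rule: subtree_at.induct) (auto split: if_splits)

lemma leaf_position_unique:
  assumes "distinct (map lbl (leaves t))"
    and "subtree_at t r = Some (Leaf x)" "subtree_at t r' = Some (Leaf x')" "lbl x = lbl x'"
  shows "r = r'"
  using assms
proof (induction t arbitrary: r r')
  case (Tens A B)
  then show ?case
    by (cases r; cases r'; auto split: if_splits dest!: leaf_in_leaves)
next
  case (Par A B)
  then show ?case
    by (cases r; cases r'; auto split: if_splits dest!: leaf_in_leaves)
qed (auto elim: subtree_at.elims)

lemma node_at_LN: "node_at c t q = LN l \<Longrightarrow> \<exists>x. subtree_at t q = Some (Leaf x) \<and> lbl x = l"
  by (auto simp: node_at_def split: option.splits tr.splits)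

lemma tree_edges_leaf_parent:
  assumes "distinct (map lbl (leaves t))"
    and "(u, d, LN l, par) \<in> tree_edges c t" "(u', d', LN l, par') \<in> tree_edges c t"
  shows "u = u'"
proof -
  obtain q x where q: "u = PN (c @ q)" "subtree_at t (q @ [d]) = Some (Leaf x)" "lbl x = l"
    using assms(2) node_at_LN unfolding tree_edges_member by metis
  obtain q' x' where q': "u' = PN (c @ q')" "subtree_at t (q' @ [d']) = Some (Leaf x')" "lbl x' = l"
    using assms(3) node_at_LN unfolding tree_edges_member by metis
  have "q @ [d] = q' @ [d']" using leaf_position_unique[OF assms(1) q(2) q'(2)] q(3) q'(3) by simp
  then show ?thesis using q(1) q'(1) by simp
qed

definition seq_edges :: "('a, 'l) form list \<Rightarrow> 'l tedge set" where
  "seq_edges \<Gamma> =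
     {(GN k p, d, gnode \<Gamma> k (p @ [d]), False) | k p d A B.
        k < length \<Gamma> \<and> subtree_at (\<Gamma> ! k) p = Some (Tens A B)}
   \<union> {(GN k p, d, gnode \<Gamma> k (p @ [d]), True) | k p d A B.
        k < length \<Gamma> \<and> subtree_at (\<Gamma> ! k) p = Some (Par A B)}"

definition seq_nodes :: "('a, 'l) form list \<Rightarrow> 'l node set" where
  "seq_nodes \<Gamma> = {gnode \<Gamma> k p | k p. k < length \<Gamma> \<and> subtree_at (\<Gamma> ! k) p \<noteq> None}"

lemma pnode_eq_node_at: "pnode P q = node_at [] P q"
  by (auto simp: pnode_def node_at_def split: option.splits tr.splits)

lemma tedges_eq:
  fixes P :: "('a, 'l) form"
  shows "tedges P \<Gamma> = tree_edges [] P \<union> seq_edges \<Gamma>"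
proof -
  have "{(PN p, d, pnode P (p @ [d]), False) | p d A B. subtree_at P p = Some (Tens A B)}
     \<union> {(PN p, d, pnode P (p @ [d]), True) | p d A B. subtree_at P p = Some (Par A B)} = tree_edges [] P"
  proof (rule set_eqI)
    fix e :: "'l tedge"
    obtain u d v par where e: "e = (u, d, v, par)" by (cases e)
    show "e \<in> {(PN p, d, pnode P (p @ [d]), False) | p d A B. subtree_at P p = Some (Tens A B)}
     \<union> {(PN p, d, pnode P (p @ [d]), True) | p d A B. subtree_at P p = Some (Par A B)} \<longleftrightarrow> e \<in> tree_edges [] P"
      unfolding e by (auto simp: tree_edges_member pnode_eq_node_at)
  qed
  then show ?thesis unfolding tedges_def seq_edges_def by (simp only: Un_assoc)
qed

lemma vertices_eq: "vertices P \<Gamma> = tree_nodes [] P \<union> seq_nodes \<Gamma>"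
proof -
  have "{pnode P p | p. subtree_at P p \<noteq> None} = tree_nodes [] P"
    by (rule set_eqI) (simp add: tree_nodes_member pnode_eq_node_at, blast)
  then show ?thesis unfolding vertices_def seq_nodes_def by blast
qed

lemma tree_nodes_subset_vertices: "subtree_at P p = Some X \<Longrightarrow> tree_nodes p X \<subseteq> vertices P \<Gamma>"
  unfolding vertices_eq using tree_nodes_split[of P p X "[]"] by auto

lemma gnode_not_PN: "gnode \<Gamma> k q \<noteq> PN q'"
  by (auto simp: gnode_def split: option.splits tr.splits)

lemma seq_edges_nodes: "(u, d, v, par) \<in> seq_edges \<Gamma> \<Longrightarrow> (\<exists>k q. u = GN k q) \<and> (\<forall>q. v \<noteq> PN q)"
  by (auto simp: seq_edges_def gnode_not_PN)

lemma tedges_proper: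
  assumes "(u, d, v, par) \<in> tedges P \<Gamma>"
  shows "u \<noteq> v"
proof -
  have "PN q \<noteq> node_at [] P (q @ [d])" "GN k q \<noteq> gnode \<Gamma> k (q @ [d])" for q k
    by (auto simp: node_at_def gnode_def split: option.split tr.split)
  then show ?thesis using assms unfolding tedges_eq by (auto simp: tree_edges_member seq_edges_def)
qed

definition switch_edges :: "'l tedge set \<Rightarrow> ('l node \<Rightarrow> bool) \<Rightarrow> 'l node set set" where
  "switch_edges T s = {{u, v} | u d v par. (u, d, v, par) \<in> T \<and> \<not> (par \<and> s u = d)}"

lemma sw_edges_eq: "sw_edges P \<Gamma> s = switch_edges (tedges P \<Gamma>) s"
  by (simp add: sw_edges_def switch_edges_def)

lemma switch_edges_Un: "switch_edges (A \<union> B) s = switch_edges A s \<union> switch_edges B s"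
  unfolding switch_edges_def by blast

lemma switch_edges_insert:
  "switch_edges (insert (u, d, v, par) T) s = (if par \<and> s u = d then switch_edges T s else insert {u, v} (switch_edges T s))"
  unfolding switch_edges_def by auto

lemma switch_edges_empty [simp]: "switch_edges {} s = {}"
  unfolding switch_edges_def by blast

lemma switch_edges_cong: "(\<And>u d v. (u, d, v, True) \<in> T \<Longrightarrow> s u = s' u) \<Longrightarrow> switch_edges T s = switch_edges T s'"
  unfolding switch_edges_def by fastforce

definition switching_trees :: "('a, 'l) form \<Rightarrow> ('a, 'l) form list \<Rightarrow> bool" where
  "switching_trees P \<Gamma> \<longleftrightarrow> (\<forall>s. spanning_tree (vertices P \<Gamma>) (sw_edges P \<Gamma> s))"

lemma correct_iff_switching_trees: "correct P \<Gamma> \<longleftrightarrow> pre_proof_graph P \<Gamma> \<and> switching_trees P \<Gamma>"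
proof -
  have "proper_edges (sw_edges P \<Gamma> s)" for s
    unfolding proper_edges_def sw_edges_def using tedges_proper by blast
  then show ?thesis
    unfolding correct_def switching_trees_def spanning_tree_def by (auto simp: gacyclic_iff_all_bridges)
qed

section \<open>Rewriting inside a redex\<close>

definition node_rename :: "(bool list \<Rightarrow> bool list) \<Rightarrow> 'l node \<Rightarrow> 'l node" where
  "node_rename \<phi> n = (case n of PN q \<Rightarrow> PN (\<phi> q) | _ \<Rightarrow> n)"

definition edge_rename :: "(bool list \<Rightarrow> bool list) \<Rightarrow> 'l tedge \<Rightarrow> 'l tedge" where
  "edge_rename \<phi> = (\<lambda>(u, d, v, par). (node_rename \<phi> u, d, node_rename \<phi> v, par))"

lemma node_rename_simps [simp]:
  "node_rename \<phi> (PN q) = PN (\<phi> q)" "node_rename \<phi> (LN l) = LN l" "node_rename \<phi> (GN k q) = GN k q"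
  by (simp_all add: node_rename_def)

lemma edge_rename_simp [simp]: "edge_rename \<phi> (u, d, v, par) = (node_rename \<phi> u, d, node_rename \<phi> v, par)"
  by (simp add: edge_rename_def)

lemma inj_node_rename: "inj \<phi> \<Longrightarrow> inj (node_rename \<phi>)"
  unfolding inj_def node_rename_def by (auto split: node.splits)

lemma root_node_rename:
  "\<forall>r. \<phi> (c @ r) = c' @ r \<Longrightarrow> node_rename \<phi> (root_node c t) = root_node c' t"
  by (cases t) (auto dest: spec[of _ "[]"])

lemma tree_edges_rename:
  "\<forall>r. \<phi> (c @ r) = c' @ r \<Longrightarrow> edge_rename \<phi> ` tree_edges c t = tree_edges c' t"
proof (induction t arbitrary: c c')
  case (Tens A B)
  then have "\<forall>r. \<phi> ((c @ [d]) @ r) = (c' @ [d]) @ r" for d by simp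
  with Tens show ?case by (simp add: image_Un root_node_rename) (metis append_Nil2)
next
  case (Par A B)
  then have "\<forall>r. \<phi> ((c @ [d]) @ r) = (c' @ [d]) @ r" for d by simp
  with Par show ?case by (simp add: image_Un root_node_rename) (metis append_Nil2)
qed simp

lemma tree_nodes_rename:
  "\<forall>r. \<phi> (c @ r) = c' @ r \<Longrightarrow> node_rename \<phi> ` tree_nodes c t = tree_nodes c' t"
proof (induction t arbitrary: c c')
  case (Tens A B)
  then have "\<forall>r. \<phi> ((c @ [d]) @ r) = (c' @ [d]) @ r" for d by simp
  with Tens show ?case by (simp add: image_Un) (metis append_Nil2)
next
  case (Par A B)
  then have "\<forall>r. \<phi> ((c @ [d]) @ r) = (c' @ [d]) @ r" for d by simp
  with Par show ?case by (simp add: image_Un) (metis append_Nil2)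
qed simp

definition relocate :: "(bool list \<Rightarrow> bool list) \<Rightarrow> bool list \<Rightarrow> bool list \<Rightarrow> bool list" where
  "relocate f p q = (if \<exists>r. q = p @ r then p @ f (drop (length p) q) else q)"

lemma relocate_append: "relocate f p (p @ r) = p @ f r"
  by (simp add: relocate_def)

lemma inj_relocate:
  assumes "inj f"
  shows "inj (relocate f p)"
proof (rule injI)
  fix q q' assume "relocate f p q = relocate f p q'"
  then show "q = q'" using assms unfolding relocate_def by (auto split: if_splits simp: inj_eq)
qed

lemma node_rename_relocate_outside: "outside p n \<Longrightarrow> node_rename (relocate f p) n = n"
  by (auto simp: outside_def relocate_def split: node.splits)

lemma relocate_shift: "(\<And>r. f (a @ r) = a' @ r) \<Longrightarrow> \<forall>r. relocate f p ((p @ a) @ r) = (p @ a') @ r"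
  by (simp add: relocate_def)

lemma image_fixed: "(\<And>x. x \<in> A \<Longrightarrow> f x = x) \<Longrightarrow> f ` A = A"
  by (metis image_cong image_ident)

lemma context_edges_relocate:
  assumes "f [] = []"
  shows "edge_rename (relocate f p) ` context_edges [] t p = context_edges [] t p"
proof -
  have fix_p: "relocate f p p = p" using relocate_append[of f p "[]"] assms by simp
  have "edge_rename (relocate f p) (u, d, v, par) = (u, d, v, par)"
    if "(u, d, v, par) \<in> context_edges [] t p" for u d v par
    using context_edges_outside[OF that] by (auto simp: node_rename_relocate_outside fix_p)
  then show ?thesis by (intro image_fixed) auto
qed

lemma context_nodes_relocate: "node_rename (relocate f p) ` context_nodes [] t p = context_nodes [] t p"
proof -
  have "node_rename (relocate f p) n = n" if "n \<in> context_nodes [] t p" for n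
    using context_nodes_outside[OF that] by (simp add: node_rename_relocate_outside)
  then show ?thesis by (rule image_fixed)
qed

lemma node_rename_gnode: "node_rename \<phi> (gnode \<Gamma> k q) = gnode \<Gamma> k q"
  by (auto simp: gnode_def split: option.splits tr.splits)

lemma seq_edges_rename: "edge_rename \<phi> ` seq_edges \<Gamma> = seq_edges \<Gamma>"
  by (rule image_fixed) (auto simp: seq_edges_def node_rename_gnode)

lemma seq_nodes_rename: "node_rename \<phi> ` seq_nodes \<Gamma> = seq_nodes \<Gamma>"
  by (rule image_fixed) (auto simp: seq_nodes_def node_rename_gnode)

lemma switch_edges_rename:
  "switch_edges (edge_rename \<phi> ` T) s = edge_image (node_rename \<phi>) (switch_edges T (s \<circ> node_rename \<phi>))"
proof (rule set_eqI, rule iffI)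
  fix e assume "e \<in> switch_edges (edge_rename \<phi> ` T) s"
  then obtain u d v par where e: "e = {u, v}" "(u, d, v, par) \<in> edge_rename \<phi> ` T" "\<not> (par \<and> s u = d)"
    unfolding switch_edges_def by blast
  from e(2) obtain u0 v0 where uv: "(u0, d, v0, par) \<in> T" "u = node_rename \<phi> u0" "v = node_rename \<phi> v0"
    by auto
  then have "{u0, v0} \<in> switch_edges T (s \<circ> node_rename \<phi>)" using e(3) unfolding switch_edges_def by auto
  moreover have "e = node_rename \<phi> ` {u0, v0}" using e(1) uv by simp
  ultimately show "e \<in> edge_image (node_rename \<phi>) (switch_edges T (s \<circ> node_rename \<phi>))"
    unfolding edge_image_def by blast
next
  fix e assume "e \<in> edge_image (node_rename \<phi>) (switch_edges T (s \<circ> node_rename \<phi>))"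
  then obtain e0 where "e0 \<in> switch_edges T (s \<circ> node_rename \<phi>)" "e = node_rename \<phi> ` e0"
    unfolding edge_image_def by blast
  then obtain u d v par where uv: "(u, d, v, par) \<in> T" "\<not> (par \<and> (s \<circ> node_rename \<phi>) u = d)"
    and e: "e = node_rename \<phi> ` {u, v}"
    unfolding switch_edges_def by blast
  have "(node_rename \<phi> u, d, node_rename \<phi> v, par) \<in> edge_rename \<phi> ` T"
    using uv(1) by (rule image_eqI[rotated]) simp
  moreover have "\<not> (par \<and> s (node_rename \<phi> u) = d)" using uv(2) by simp
  ultimately have "{node_rename \<phi> u, node_rename \<phi> v} \<in> switch_edges (edge_rename \<phi> ` T) s"
    unfolding switch_edges_def by blast
  then show "e \<in> switch_edges (edge_rename \<phi> ` T) s" by (simp add: e)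
qed

text \<open>The switching edges left untouched by a rewrite at position \<open>p\<close> whose redex has the
  edges \<open>B\<close> of its unchanged subformulas.\<close>
definition outer_edges ::
    "('a, 'l) form \<Rightarrow> ('a, 'l) form list \<Rightarrow> bool list \<Rightarrow> 'l tedge set \<Rightarrow> ('l node \<Rightarrow> bool) \<Rightarrow> 'l node set set"
  where "outer_edges P \<Gamma> p B s = switch_edges (context_edges [] P p \<union> seq_edges \<Gamma> \<union> B) s"

text \<open>Relabelling positions by \<open>relocate f p\<close> turns the graph of \<open>replace_at P p Y\<close> into an
  isomorphic copy on the nodes of \<open>P\<close>, in which only the edges of the redex differ.\<close>
lemma switching_trees_redex:
  fixes P X Y :: "('a, 'l) form"
  assumes sub: "subtree_at P p = Some X" and nonleaf: "nonleaf X" "nonleaf Y"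
    and f: "inj f" "f [] = []"
    and X: "tree_edges p X = Lx \<union> B"
    and Y: "edge_rename (relocate f p) ` (Ly \<union> B) = tree_edges p Y"
    and N: "node_rename (relocate f p) ` tree_nodes p X = tree_nodes p Y"
  shows "switching_trees P \<Gamma> \<longleftrightarrow>
      (\<forall>s. spanning_tree (vertices P \<Gamma>) (outer_edges P \<Gamma> p B s \<union> switch_edges Lx s))"
    and "switching_trees (replace_at P p Y) \<Gamma> \<longleftrightarrow>
      (\<forall>s. spanning_tree (vertices P \<Gamma>) (outer_edges P \<Gamma> p B s \<union> switch_edges Ly s))"
proof -
  let ?\<phi> = "node_rename (relocate f p)" and ?P' = "replace_at P p Y"
  define T where "T = context_edges [] P p \<union> seq_edges \<Gamma> \<union> (Ly \<union> B)"
  have sub': "subtree_at ?P' p = Some Y" by (rule subtree_at_replace_at[OF sub])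
  have tedges_split: "tedges Q \<Gamma> = context_edges [] Q p \<union> tree_edges p Z \<union> seq_edges \<Gamma>"
    if "subtree_at Q p = Some Z" "nonleaf Z" for Q Z :: "('a, 'l) form"
    using tree_edges_split[OF that, of "[]"] by (simp add: tedges_eq)
  have vertices_split: "vertices Q \<Gamma> = context_nodes [] Q p \<union> tree_nodes p Z \<union> seq_nodes \<Gamma>"
    if "subtree_at Q p = Some Z" for Q Z :: "('a, 'l) form"
    using tree_nodes_split[OF that, of "[]"] by (simp add: vertices_eq)
  show "switching_trees P \<Gamma> \<longleftrightarrow>
      (\<forall>s. spanning_tree (vertices P \<Gamma>) (outer_edges P \<Gamma> p B s \<union> switch_edges Lx s))"
    unfolding switching_trees_def sw_edges_eq tedges_split[OF sub nonleaf(1)] X outer_edges_def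
    by (simp add: switch_edges_Un Un_ac)
  have "tedges ?P' \<Gamma> = context_edges [] P p \<union> seq_edges \<Gamma> \<union> edge_rename (relocate f p) ` (Ly \<union> B)"
    using tedges_split[OF sub' nonleaf(2)] context_edges_replace_at[OF sub] Y by auto
  also have "\<dots> = edge_rename (relocate f p) ` T"
    by (simp add: T_def image_Un context_edges_relocate[of f, OF f(2)] seq_edges_rename Un_ac)
  moreover have "vertices ?P' \<Gamma> = ?\<phi> ` vertices P \<Gamma>"
    unfolding vertices_split[OF sub'] vertices_split[OF sub] context_nodes_replace_at[OF sub] image_Un
      context_nodes_relocate seq_nodes_rename N ..
  ultimately have "spanning_tree (vertices ?P' \<Gamma>) (sw_edges ?P' \<Gamma> s)
      \<longleftrightarrow> spanning_tree (vertices P \<Gamma>) (switch_edges T (s \<circ> ?\<phi>))" for s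
    unfolding sw_edges_eq
    by (simp add: switch_edges_rename spanning_tree_edge_image inj_node_rename inj_relocate f(1))
  moreover have "s = (s \<circ> inv ?\<phi>) \<circ> ?\<phi>" for s :: "'l node \<Rightarrow> bool"
    by (simp add: fun_eq_iff inv_f_f[OF inj_node_rename[OF inj_relocate[OF f(1)]]])
  ultimately have "switching_trees ?P' \<Gamma> \<longleftrightarrow> (\<forall>s. spanning_tree (vertices P \<Gamma>) (switch_edges T s))"
    unfolding switching_trees_def by metis
  then show "switching_trees ?P' \<Gamma> \<longleftrightarrow>
      (\<forall>s. spanning_tree (vertices P \<Gamma>) (outer_edges P \<Gamma> p B s \<union> switch_edges Ly s))"
    unfolding T_def outer_edges_def by (simp add: switch_edges_Un Un_ac)
qed

definition avoids :: "'l tedge set \<Rightarrow> 'l node \<Rightarrow> bool" where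
  "avoids T n \<longleftrightarrow> (\<forall>u d v par. (u, d, v, par) \<in> T \<longrightarrow> u \<noteq> n \<and> v \<noteq> n)"

lemma avoidsD: "avoids T n \<Longrightarrow> (u, d, v, par) \<in> T \<Longrightarrow> u \<noteq> n \<and> v \<noteq> n"
  unfolding avoids_def by blast

lemma avoids_Un: "avoids (A \<union> B) n \<longleftrightarrow> avoids A n \<and> avoids B n"
  unfolding avoids_def by blast

lemma avoids_tree_edges: "\<not> (\<exists>r. q = c @ r) \<Longrightarrow> avoids (tree_edges c t) (PN q)"
  unfolding avoids_def using tree_edges_inside by (fastforce simp: inside_def)

lemma context_edges_parent: "(u, d, v, par) \<in> context_edges c t p \<Longrightarrow> \<exists>q. u = PN q"
proof (induction c t p rule: context_edges.induct)
  case (3 c A B e p)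
  then show ?case by (cases e) (auto simp: tree_edges_member)
next
  case (4 c A B e p)
  then show ?case by (cases e) (auto simp: tree_edges_member)
qed auto

lemma outer_edges_fresh:
  assumes "avoids B (PN (p @ r))" "r \<noteq> []"
  shows "PN (p @ r) \<notin> \<Union>(outer_edges P \<Gamma> p B s)"
proof -
  have "u \<noteq> PN (p @ r) \<and> v \<noteq> PN (p @ r)" if "(u, d, v, par) \<in> context_edges [] P p \<union> seq_edges \<Gamma> \<union> B"
    for u d v par
    using that context_edges_outside[of u d v par "[]" P p] seq_edges_nodes[of u d v par] assms
    by (auto simp: outside_def dest: avoidsD)
  then show ?thesis unfolding outer_edges_def switch_edges_def by blast
qed

lemma outer_edges_root:
  assumes "avoids B (PN p)" "inside p z"
  shows "{PN p, z} \<notin> outer_edges P \<Gamma> p B s"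
proof -
  have "{u, v} \<noteq> {PN p, z}" if "(u, d, v, par) \<in> context_edges [] P p \<union> seq_edges \<Gamma> \<union> B"
    for u d v par
    using that context_edges_outside[of u d v par "[]" P p] context_edges_parent[of u d v par "[]" P p]
      seq_edges_nodes[of u d v par] assms
    by (auto simp: outside_def inside_def doubleton_eq_iff split: node.splits dest: avoidsD)
  then show ?thesis unfolding outer_edges_def switch_edges_def by blast
qed

lemma outer_edges_update:
  assumes "avoids B (PN (p @ r))"
  shows "outer_edges P \<Gamma> p B (s(PN (p @ r) := \<alpha>)) = outer_edges P \<Gamma> p B s"
  unfolding outer_edges_def
proof (rule switch_edges_cong)
  fix u d v assume "(u, d, v, True) \<in> context_edges [] P p \<union> seq_edges \<Gamma> \<union> B"
  then have "u \<noteq> PN (p @ r)"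
    using context_edges_outside[of u d v True "[]" P p] seq_edges_nodes[of u d v True] assms
    by (auto simp: outside_def dest: avoidsD)
  then show "(s(PN (p @ r) := \<alpha>)) u = s u" by simp
qed

lemma outer_edges_subset_ext_sw_edges:
  assumes sub: "subtree_at P p = Some X" "nonleaf X" and labels: "distinct (map lbl (leaves P))"
    and X: "tree_edges p X = L \<union> B" and parent: "(PN (p @ r), d, LN i, par) \<in> L"
    and avoid: "avoids B (PN (p @ r))"
  shows "outer_edges P \<Gamma> p B s \<subseteq> ext_sw_edges P \<Gamma> s i"
proof
  have split: "tree_edges [] P = context_edges [] P p \<union> L \<union> B"
    using tree_edges_split[OF sub, of "[]"] X by auto
  fix e assume "e \<in> outer_edges P \<Gamma> p B s"
  then obtain u d' v par' where e: "e = {u, v}" "\<not> (par' \<and> s u = d')"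
    and uv: "(u, d', v, par') \<in> context_edges [] P p \<union> seq_edges \<Gamma> \<union> B"
    unfolding outer_edges_def switch_edges_def by blast
  have "\<not> (is_PN u \<and> v = LN i)"
  proof
    assume u: "is_PN u \<and> v = LN i"
    then have "(u, d', LN i, par') \<in> context_edges [] P p \<union> B"
      using uv seq_edges_nodes[of u d' v par' \<Gamma>] by auto
    moreover have "u = PN (p @ r)"
      using calculation parent tree_edges_leaf_parent[OF labels, of u d' i par' "[]"] split by blast
    ultimately show False
      using context_edges_outside[of u d' "LN i" par' "[]" P p] avoidsD[OF avoid]
      by (auto simp: outside_def)
  qed
  moreover have "(u, d', v, par') \<in> tedges P \<Gamma>" using uv split by (auto simp: tedges_eq)
  ultimately show "e \<in> ext_sw_edges P \<Gamma> s i" unfolding ext_sw_edges_def using e by blast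
qed

lemma all_switchings_split1:
  assumes "\<And>s \<alpha>. G (s(x := \<alpha>)) = G s"
  shows "(\<forall>s. \<Phi> (G s) (s x)) \<longleftrightarrow> (\<forall>s \<alpha>. \<Phi> (G s) \<alpha>)"
proof (intro iffI allI)
  fix s \<alpha> assume "\<forall>s. \<Phi> (G s) (s x)"
  then have "\<Phi> (G (s(x := \<alpha>))) ((s(x := \<alpha>)) x)" by blast
  then show "\<Phi> (G s) \<alpha>" using assms by simp
qed simp

lemma all_switchings_split2:
  assumes "\<And>s \<alpha> \<beta>. G (s(x := \<alpha>, y := \<beta>)) = G s" "x \<noteq> y"
  shows "(\<forall>s. \<Phi> (G s) (s x) (s y)) \<longleftrightarrow> (\<forall>s \<alpha> \<beta>. \<Phi> (G s) \<alpha> \<beta>)"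
proof (intro iffI allI)
  fix s \<alpha> \<beta> assume "\<forall>s. \<Phi> (G s) (s x) (s y)"
  then have "\<Phi> (G (s(x := \<alpha>, y := \<beta>))) ((s(x := \<alpha>, y := \<beta>)) x) ((s(x := \<alpha>, y := \<beta>)) y)"
    by blast
  then have "\<Phi> (G (s(x := \<alpha>, y := \<beta>))) \<alpha> \<beta>" using assms(2) by simp
  then show "\<Phi> (G s) \<alpha> \<beta>" using assms(1) by simp
qed simp

section \<open>The five rewrite steps\<close>

lemma relocate_root: "f [] = [] \<Longrightarrow> relocate f p p = p"
  using relocate_append[of f p "[]"] by simp

lemma root_node_in_vertices: "subtree_at P q = Some t \<Longrightarrow> root_node q t \<in> vertices P \<Gamma>"
  using tree_nodes_subset_vertices root_node_in_tree_nodes by blast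

lemma inside_root_node_append: "inside c (root_node (c @ r) t)"
  using inside_root_node inside_append by blast

fun swap_pos :: "bool list \<Rightarrow> bool list" where
  "swap_pos [] = []"
| "swap_pos (d # r) = (\<not> d) # r"

text \<open>Relative positions under the rotation \<open>A \<circ> (B \<circ> C) \<mapsto> (A \<circ> B) \<circ> C\<close> and its inverse.\<close>
fun rotl_pos :: "bool list \<Rightarrow> bool list" where
  "rotl_pos [] = []"
| "rotl_pos (False # r) = False # False # r"
| "rotl_pos [True] = [False]"
| "rotl_pos (True # False # r) = False # True # r"
| "rotl_pos (True # True # r) = True # r"

fun rotr_pos :: "bool list \<Rightarrow> bool list" where
  "rotr_pos [] = []"
| "rotr_pos [False] = [True]"
| "rotr_pos (False # False # r) = False # r"
| "rotr_pos (False # True # r) = True # False # r"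
| "rotr_pos (True # r) = True # True # r"

lemma inj_swap_pos: "inj swap_pos"
proof -
  have "swap_pos (swap_pos q) = q" for q by (cases q) auto
  then show ?thesis by (metis injI)
qed

lemma inj_rotl_pos: "inj rotl_pos"
proof -
  have "rotr_pos (rotl_pos q) = q" for q by (induction q rule: rotl_pos.induct) auto
  then show ?thesis by (metis injI)
qed

lemma inj_rotr_pos: "inj rotr_pos"
proof -
  have "rotl_pos (rotr_pos q) = q" for q by (induction q rule: rotr_pos.induct) auto
  then show ?thesis by (metis injI)
qed

lemma relocate_swap_pos: "\<forall>r. relocate swap_pos p ((p @ [d]) @ r) = (p @ [\<not> d]) @ r"
  by (rule relocate_shift) simp

lemma switching_trees_par_comm:
  fixes P Q R :: "('a, 'l) form"
  assumes sub: "subtree_at P p = Some (Par Q R)"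
  shows "switching_trees (replace_at P p (Par R Q)) \<Gamma> \<longleftrightarrow> switching_trees P \<Gamma>"
proof -
  define x :: "'l node" where "x = PN p"
  define a where "a = root_node (p @ [False]) Q"
  define b where "b = root_node (p @ [True]) R"
  define B where "B = tree_edges (p @ [False]) Q \<union> tree_edges (p @ [True]) R"
  define Out where "Out = outer_edges P \<Gamma> p B"
  have X: "tree_edges p (Par Q R) = {(x, False, a, True), (x, True, b, True)} \<union> B"
    unfolding x_def a_def b_def B_def by auto
  have Y: "edge_rename (relocate swap_pos p) ` ({(x, True, a, True), (x, False, b, True)} \<union> B)
      = tree_edges p (Par R Q)"
    unfolding x_def a_def b_def B_def using relocate_root[of swap_pos p]
    by (simp add: image_Un root_node_rename[OF relocate_swap_pos] tree_edges_rename[OF relocate_swap_pos]) blast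
  have N: "node_rename (relocate swap_pos p) ` tree_nodes p (Par Q R) = tree_nodes p (Par R Q)"
    using relocate_root[of swap_pos p] by (simp add: image_Un tree_nodes_rename[OF relocate_swap_pos]) blast
  have "nonleaf (Par Q R)" "nonleaf (Par R Q)" by (simp_all add: nonleaf_def)
  note trees = switching_trees_redex[OF sub this inj_swap_pos swap_pos.simps(1) X Y N, of \<Gamma>, folded Out_def]
  have "avoids B x" unfolding B_def x_def avoids_Un by (intro conjI avoids_tree_edges) simp_all
  then have "Out (s(x := \<alpha>)) = Out s" for s \<alpha>
    using outer_edges_update[of B p "[]"] unfolding Out_def x_def by simp
  note split = all_switchings_split1[of Out x, OF this]
  have sw: "switch_edges {(x, False, a, True), (x, True, b, True)} s = {if s x then {x, a} else {x, b}}"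
    "switch_edges {(x, True, a, True), (x, False, b, True)} s = {if s x then {x, b} else {x, a}}" for s
    by (simp_all add: switch_edges_insert)
  have "switching_trees P \<Gamma> \<longleftrightarrow> (\<forall>s \<alpha>. spanning_tree (vertices P \<Gamma>) (Out s \<union> {if \<alpha> then {x, a} else {x, b}}))"
    "switching_trees (replace_at P p (Par R Q)) \<Gamma>
      \<longleftrightarrow> (\<forall>s \<alpha>. spanning_tree (vertices P \<Gamma>) (Out s \<union> {if \<alpha> then {x, b} else {x, a}}))"
    unfolding trees sw by (rule split)+
  then show ?thesis by (simp add: all_bool_eq conj_commute)
qed

lemma switching_trees_tens_comm:
  fixes P Q R :: "('a, 'l) form"
  assumes sub: "subtree_at P p = Some (Tens Q R)"
  shows "switching_trees (replace_at P p (Tens R Q)) \<Gamma> \<longleftrightarrow> switching_trees P \<Gamma>"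
proof -
  define x :: "'l node" where "x = PN p"
  define a where "a = root_node (p @ [False]) Q"
  define b where "b = root_node (p @ [True]) R"
  define B where "B = tree_edges (p @ [False]) Q \<union> tree_edges (p @ [True]) R"
  have X: "tree_edges p (Tens Q R) = {(x, False, a, False), (x, True, b, False)} \<union> B"
    unfolding x_def a_def b_def B_def by auto
  have Y: "edge_rename (relocate swap_pos p) ` ({(x, True, a, False), (x, False, b, False)} \<union> B)
      = tree_edges p (Tens R Q)"
    unfolding x_def a_def b_def B_def using relocate_root[of swap_pos p]
    by (simp add: image_Un root_node_rename[OF relocate_swap_pos] tree_edges_rename[OF relocate_swap_pos]) blast
  have N: "node_rename (relocate swap_pos p) ` tree_nodes p (Tens Q R) = tree_nodes p (Tens R Q)"
    using relocate_root[of swap_pos p] by (simp add: image_Un tree_nodes_rename[OF relocate_swap_pos]) blast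
  have "nonleaf (Tens Q R)" "nonleaf (Tens R Q)" by (simp_all add: nonleaf_def)
  from switching_trees_redex[OF sub this inj_swap_pos swap_pos.simps(1) X Y N, of \<Gamma>]
  show ?thesis by (simp add: switch_edges_insert insert_commute)
qed

lemma par_assoc_switchings:
  fixes P Q R S :: "('a, 'l) form"
  assumes sub: "subtree_at P p = Some (Par (Par Q R) S)"
  defines "x \<equiv> PN p" and "y \<equiv> PN (p @ [False])" and "a \<equiv> root_node (p @ [False, False]) Q"
    and "b \<equiv> root_node (p @ [False, True]) R" and "c \<equiv> root_node (p @ [True]) S"
    and "B \<equiv> tree_edges (p @ [False, False]) Q \<union> tree_edges (p @ [False, True]) R \<union> tree_edges (p @ [True]) S"
  shows "switching_trees P \<Gamma> \<longleftrightarrow> (\<forall>s \<alpha> \<beta>. spanning_tree (vertices P \<Gamma>)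
      (outer_edges P \<Gamma> p B s \<union> {if \<alpha> then {x, y} else {x, c}, if \<beta> then {y, a} else {y, b}}))"
    and "switching_trees (replace_at P p (Par Q (Par R S))) \<Gamma> \<longleftrightarrow> (\<forall>s \<alpha> \<beta>. spanning_tree (vertices P \<Gamma>)
      (outer_edges P \<Gamma> p B s \<union> {if \<alpha> then {x, a} else {x, y}, if \<beta> then {y, b} else {y, c}}))"
proof -
  define Out where "Out = outer_edges P \<Gamma> p B"
  have X: "tree_edges p (Par (Par Q R) S)
      = {(x, False, y, True), (x, True, c, True), (y, False, a, True), (y, True, b, True)} \<union> B"
    unfolding x_def y_def a_def b_def c_def B_def by auto
  have sh: "\<forall>r. relocate rotr_pos p ((p @ [False, False]) @ r) = (p @ [False]) @ r"
    "\<forall>r. relocate rotr_pos p ((p @ [False, True]) @ r) = (p @ [True, False]) @ r"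
    "\<forall>r. relocate rotr_pos p ((p @ [True]) @ r) = (p @ [True, True]) @ r"
    by (rule relocate_shift; simp)+
  have y': "relocate rotr_pos p (p @ [False]) = p @ [True]" using relocate_append[of rotr_pos p "[False]"] by simp
  then have Y: "edge_rename (relocate rotr_pos p)
      ` ({(x, False, a, True), (x, True, y, True), (y, False, b, True), (y, True, c, True)} \<union> B)
      = tree_edges p (Par Q (Par R S))"
    unfolding x_def y_def a_def b_def c_def B_def using relocate_root[of rotr_pos p]
    by (simp add: image_Un root_node_rename[OF sh(1)] root_node_rename[OF sh(2)] root_node_rename[OF sh(3)]
        tree_edges_rename[OF sh(1)] tree_edges_rename[OF sh(2)] tree_edges_rename[OF sh(3)]) blast
  have N: "node_rename (relocate rotr_pos p) ` tree_nodes p (Par (Par Q R) S) = tree_nodes p (Par Q (Par R S))"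
    using relocate_root[of rotr_pos p] y'
    by (simp add: image_Un tree_nodes_rename[OF sh(1)] tree_nodes_rename[OF sh(2)] tree_nodes_rename[OF sh(3)])
      blast
  have "nonleaf (Par (Par Q R) S)" "nonleaf (Par Q (Par R S))" by (simp_all add: nonleaf_def)
  note trees = switching_trees_redex[OF sub this inj_rotr_pos rotr_pos.simps(1) X Y N, of \<Gamma>, folded Out_def]
  have "avoids B x" "avoids B y"
    unfolding B_def x_def y_def avoids_Un by (intro conjI avoids_tree_edges; simp)+
  then have "Out (s(x := \<alpha>, y := \<beta>)) = Out (s(x := \<alpha>))" "Out (s(x := \<alpha>)) = Out s" for s \<alpha> \<beta>
    using outer_edges_update[of B p "[False]"] outer_edges_update[of B p "[]"]
    unfolding Out_def x_def y_def by simp_all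
  then have "Out (s(x := \<alpha>, y := \<beta>)) = Out s" for s \<alpha> \<beta> by simp
  note split = all_switchings_split2[of Out x y, OF this]
  have sw: "switch_edges {(x, False, y, True), (x, True, c, True), (y, False, a, True), (y, True, b, True)} s
      = {if s x then {x, y} else {x, c}, if s y then {y, a} else {y, b}}"
    "switch_edges {(x, False, a, True), (x, True, y, True), (y, False, b, True), (y, True, c, True)} s
      = {if s x then {x, a} else {x, y}, if s y then {y, b} else {y, c}}" for s
    by (auto simp: switch_edges_insert)
  have "x \<noteq> y" unfolding x_def y_def by simp
  then show "switching_trees P \<Gamma> \<longleftrightarrow> (\<forall>s \<alpha> \<beta>. spanning_tree (vertices P \<Gamma>)
      (outer_edges P \<Gamma> p B s \<union> {if \<alpha> then {x, y} else {x, c}, if \<beta> then {y, a} else {y, b}}))"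
    and "switching_trees (replace_at P p (Par Q (Par R S))) \<Gamma> \<longleftrightarrow> (\<forall>s \<alpha> \<beta>. spanning_tree (vertices P \<Gamma>)
      (outer_edges P \<Gamma> p B s \<union> {if \<alpha> then {x, a} else {x, y}, if \<beta> then {y, b} else {y, c}}))"
    unfolding trees sw Out_def[symmetric] by (rule split)+
qed

lemma switching_trees_par_assoc:
  fixes P Q R S :: "('a, 'l) form"
  assumes sub: "subtree_at P p = Some (Par (Par Q R) S)"
  shows "switching_trees (replace_at P p (Par Q (Par R S))) \<Gamma> \<longleftrightarrow> switching_trees P \<Gamma>"
proof -
  define x :: "'l node" where "x = PN p"
  define y :: "'l node" where "y = PN (p @ [False])"
  define a where "a = root_node (p @ [False, False]) Q"
  define b where "b = root_node (p @ [False, True]) R"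
  define c where "c = root_node (p @ [True]) S"
  define B where "B = tree_edges (p @ [False, False]) Q \<union> tree_edges (p @ [False, True]) R \<union> tree_edges (p @ [True]) S"
  have avoid: "avoids B x" "avoids B y"
    unfolding B_def x_def y_def avoids_Un by (intro conjI avoids_tree_edges; simp)+
  have fresh: "y \<notin> \<Union>(outer_edges P \<Gamma> p B s)" for s
    using outer_edges_fresh[of B p "[False]"] avoid(2) unfolding y_def by simp
  have "inside p a" "inside p b" "inside p c"
    unfolding a_def b_def c_def using inside_root_node_append by (metis append_Cons append_Nil)+
  then have root: "{x, a} \<notin> outer_edges P \<Gamma> p B s" "{x, b} \<notin> outer_edges P \<Gamma> p B s"
    "{x, c} \<notin> outer_edges P \<Gamma> p B s" for s
    using outer_edges_root[of B p] avoid(1) unfolding x_def by simp_all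
  have dist: "x \<noteq> y" "a \<noteq> y" "b \<noteq> y" "c \<noteq> y" "x \<noteq> a" "x \<noteq> b" "x \<noteq> c"
    using root_node_cases[of "p @ [False, False]" Q] root_node_cases[of "p @ [False, True]" R]
      root_node_cases[of "p @ [True]" S]
    unfolding x_def y_def a_def b_def c_def by auto
  have V: "x \<in> vertices P \<Gamma>" "a \<in> vertices P \<Gamma>" "b \<in> vertices P \<Gamma>" "c \<in> vertices P \<Gamma>"
    using root_node_in_vertices[OF sub] root_node_in_vertices[OF subtree_at_append[OF sub, THEN trans]]
    unfolding x_def a_def b_def c_def by auto
  show ?thesis
    unfolding par_assoc_switchings[OF sub, of \<Gamma>, folded x_def y_def a_def b_def c_def B_def]
      par_assoc_local_trees[OF fresh dist root V] ..
qed

lemma bot_assoc_switchings: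
  fixes P Q :: "('a, 'l) form"
  assumes sub: "subtree_at P p = Some (Tens (Leaf (Bot i)) (Tens Q (Leaf (Bot j))))"
  defines "x \<equiv> PN p" and "y \<equiv> PN (p @ [True])" and "a \<equiv> root_node (p @ [True, False]) Q"
    and "B \<equiv> tree_edges (p @ [True, False]) Q"
  shows "switching_trees P \<Gamma> \<longleftrightarrow> (\<forall>s. spanning_tree (vertices P \<Gamma>)
      (outer_edges P \<Gamma> p B s \<union> {{x, LN i}, {x, y}, {y, a}, {y, LN j}}))"
    and "switching_trees (replace_at P p (Tens (Tens (Leaf (Bot i)) Q) (Leaf (Bot j)))) \<Gamma>
      \<longleftrightarrow> (\<forall>s. spanning_tree (vertices P \<Gamma>) (outer_edges P \<Gamma> p B s \<union> {{x, y}, {x, LN j}, {y, LN i}, {y, a}}))"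
proof -
  have X: "tree_edges p (Tens (Leaf (Bot i)) (Tens Q (Leaf (Bot j))))
      = {(x, False, LN i, False), (x, True, y, False), (y, False, a, False), (y, True, LN j, False)} \<union> B"
    unfolding x_def y_def a_def B_def by auto
  have sh: "\<forall>r. relocate rotl_pos p ((p @ [True, False]) @ r) = (p @ [False, True]) @ r"
    by (rule relocate_shift) simp
  have "relocate rotl_pos p (p @ [True]) = p @ [False]" using relocate_append[of rotl_pos p "[True]"] by simp
  then have Y: "edge_rename (relocate rotl_pos p)
      ` ({(x, False, y, False), (x, True, LN j, False), (y, False, LN i, False), (y, True, a, False)} \<union> B)
      = tree_edges p (Tens (Tens (Leaf (Bot i)) Q) (Leaf (Bot j)))"
    and N: "node_rename (relocate rotl_pos p) ` tree_nodes p (Tens (Leaf (Bot i)) (Tens Q (Leaf (Bot j))))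
      = tree_nodes p (Tens (Tens (Leaf (Bot i)) Q) (Leaf (Bot j)))"
    unfolding x_def y_def a_def B_def using relocate_root[of rotl_pos p]
    by (simp_all add: image_Un root_node_rename[OF sh] tree_edges_rename[OF sh] tree_nodes_rename[OF sh]) blast+
  have "nonleaf (Tens (Leaf (Bot i)) (Tens Q (Leaf (Bot j))))"
    "nonleaf (Tens (Tens (Leaf (Bot i)) Q) (Leaf (Bot j)))" by (simp_all add: nonleaf_def)
  from switching_trees_redex[OF sub this inj_rotl_pos rotl_pos.simps(1) X Y N, of \<Gamma>]
  show "switching_trees P \<Gamma> \<longleftrightarrow> (\<forall>s. spanning_tree (vertices P \<Gamma>)
      (outer_edges P \<Gamma> p B s \<union> {{x, LN i}, {x, y}, {y, a}, {y, LN j}}))"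
    and "switching_trees (replace_at P p (Tens (Tens (Leaf (Bot i)) Q) (Leaf (Bot j)))) \<Gamma>
      \<longleftrightarrow> (\<forall>s. spanning_tree (vertices P \<Gamma>) (outer_edges P \<Gamma> p B s \<union> {{x, y}, {x, LN j}, {y, LN i}, {y, a}}))"
    by (simp_all add: switch_edges_insert)
qed

lemma switching_trees_bot_assoc:
  fixes P Q :: "('a, 'l) form"
  assumes sub: "subtree_at P p = Some (Tens (Leaf (Bot i)) (Tens Q (Leaf (Bot j))))"
    and labels: "distinct (map lbl (leaves P))"
  shows "switching_trees (replace_at P p (Tens (Tens (Leaf (Bot i)) Q) (Leaf (Bot j)))) \<Gamma>
    \<longleftrightarrow> switching_trees P \<Gamma>"
proof -
  define x :: "'l node" where "x = PN p"
  define y :: "'l node" where "y = PN (p @ [True])"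
  define a where "a = root_node (p @ [True, False]) Q"
  define B where "B = tree_edges (p @ [True, False]) Q"
  have "avoids B x" "avoids B y"
    unfolding B_def x_def y_def by (intro avoids_tree_edges; simp)+
  then have outer: "y \<notin> \<Union>(outer_edges P \<Gamma> p B s)" "{x, LN i} \<notin> outer_edges P \<Gamma> p B s"
    "{x, LN j} \<notin> outer_edges P \<Gamma> p B s" for s
    using outer_edges_fresh[of B p "[True]"] outer_edges_root[of B p "LN i"] outer_edges_root[of B p "LN j"]
    unfolding x_def y_def by (simp_all add: inside_def)
  have "i \<noteq> j" "a \<noteq> LN i" "a \<noteq> LN j"
    using distinct_labels_subtree[OF labels sub] root_node_cases[of "p @ [True, False]" Q]
      root_node_LN[of "p @ [True, False]" Q]
    unfolding a_def by auto
  then have "x \<noteq> y" "x \<noteq> LN i" "x \<noteq> LN j" "y \<noteq> LN i" "y \<noteq> LN j" "LN i \<noteq> LN j" "a \<noteq> LN i" "a \<noteq> LN j"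
    unfolding x_def y_def by simp_all
  note local = bot_assoc_local_trees[OF outer this]
  show ?thesis
    unfolding bot_assoc_switchings[OF sub, of \<Gamma>, folded x_def y_def a_def B_def] local ..
qed

lemma bot_switch_switchings:
  fixes P Q R :: "('a, 'l) form"
  assumes sub: "subtree_at P p = Some (Par Q (Tens R (Leaf (Bot i))))"
  defines "x \<equiv> PN p" and "y \<equiv> PN (p @ [True])" and "a \<equiv> root_node (p @ [False]) Q"
    and "b \<equiv> root_node (p @ [True, False]) R"
    and "B \<equiv> tree_edges (p @ [False]) Q \<union> tree_edges (p @ [True, False]) R"
  shows "switching_trees P \<Gamma> \<longleftrightarrow> (\<forall>s \<alpha>. spanning_tree (vertices P \<Gamma>)
      (outer_edges P \<Gamma> p B s \<union> {if \<alpha> then {x, a} else {x, y}, {y, b}, {y, LN i}}))"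
    and "switching_trees (replace_at P p (Tens (Par Q R) (Leaf (Bot i)))) \<Gamma> \<longleftrightarrow> (\<forall>s \<beta>. spanning_tree (vertices P \<Gamma>)
      (outer_edges P \<Gamma> p B s \<union> {{x, y}, {x, LN i}, if \<beta> then {y, a} else {y, b}}))"
proof -
  define Out where "Out = outer_edges P \<Gamma> p B"
  have X: "tree_edges p (Par Q (Tens R (Leaf (Bot i))))
      = {(x, False, a, True), (x, True, y, True), (y, False, b, False), (y, True, LN i, False)} \<union> B"
    unfolding x_def y_def a_def b_def B_def by auto
  have sh: "\<forall>r. relocate rotl_pos p ((p @ [False]) @ r) = (p @ [False, False]) @ r"
    "\<forall>r. relocate rotl_pos p ((p @ [True, False]) @ r) = (p @ [False, True]) @ r"
    by (rule relocate_shift; simp)+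
  have "relocate rotl_pos p (p @ [True]) = p @ [False]" using relocate_append[of rotl_pos p "[True]"] by simp
  then have Y: "edge_rename (relocate rotl_pos p)
      ` ({(x, False, y, False), (x, True, LN i, False), (y, False, a, True), (y, True, b, True)} \<union> B)
      = tree_edges p (Tens (Par Q R) (Leaf (Bot i)))"
    and N: "node_rename (relocate rotl_pos p) ` tree_nodes p (Par Q (Tens R (Leaf (Bot i))))
      = tree_nodes p (Tens (Par Q R) (Leaf (Bot i)))"
    unfolding x_def y_def a_def b_def B_def using relocate_root[of rotl_pos p]
    by (simp_all add: image_Un root_node_rename[OF sh(1)] root_node_rename[OF sh(2)]
        tree_edges_rename[OF sh(1)] tree_edges_rename[OF sh(2)] tree_nodes_rename[OF sh(1)]
        tree_nodes_rename[OF sh(2)]) blast+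
  have "nonleaf (Par Q (Tens R (Leaf (Bot i))))" "nonleaf (Tens (Par Q R) (Leaf (Bot i)))"
    by (simp_all add: nonleaf_def)
  note trees = switching_trees_redex[OF sub this inj_rotl_pos rotl_pos.simps(1) X Y N, of \<Gamma>, folded Out_def]
  have "avoids B x" "avoids B y"
    unfolding B_def x_def y_def avoids_Un by (intro conjI avoids_tree_edges; simp)+
  then have "Out (s(x := \<alpha>)) = Out s" "Out (s(y := \<alpha>)) = Out s" for s \<alpha>
    using outer_edges_update[of B p "[]"] outer_edges_update[of B p "[True]"]
    unfolding Out_def x_def y_def by simp_all
  note split = all_switchings_split1[of Out x, OF this(1)] all_switchings_split1[of Out y, OF this(2)]
  have "switch_edges {(x, False, a, True), (x, True, y, True), (y, False, b, False), (y, True, LN i, False)} s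
      = {if s x then {x, a} else {x, y}, {y, b}, {y, LN i}}"
    "switch_edges {(x, False, y, False), (x, True, LN i, False), (y, False, a, True), (y, True, b, True)} s
      = {{x, y}, {x, LN i}, if s y then {y, a} else {y, b}}" for s
    by (auto simp: switch_edges_insert)
  then show "switching_trees P \<Gamma> \<longleftrightarrow> (\<forall>s \<alpha>. spanning_tree (vertices P \<Gamma>)
      (outer_edges P \<Gamma> p B s \<union> {if \<alpha> then {x, a} else {x, y}, {y, b}, {y, LN i}}))"
    and "switching_trees (replace_at P p (Tens (Par Q R) (Leaf (Bot i)))) \<Gamma> \<longleftrightarrow> (\<forall>s \<beta>. spanning_tree (vertices P \<Gamma>)
      (outer_edges P \<Gamma> p B s \<union> {{x, y}, {x, LN i}, if \<beta> then {y, a} else {y, b}}))"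
    unfolding trees Out_def[symmetric] by (simp_all only:) (rule split)+
qed

lemma bot_switch_side_condition:
  fixes P Q R :: "('a, 'l) form"
  assumes sub: "subtree_at P p = Some (Par Q (Tens R (Leaf (Bot i))))"
    and labels: "distinct (map lbl (leaves P))"
    and side: "\<not> reach (ext_sw_edges P \<Gamma> s i) (pnode P (p @ [False])) (LN i)"
  defines "B \<equiv> tree_edges (p @ [False]) Q \<union> tree_edges (p @ [True, False]) R"
  shows "\<not> reach (outer_edges P \<Gamma> p B s) (root_node (p @ [False]) Q) (LN i)"
proof -
  let ?L = "{(PN p, False, root_node (p @ [False]) Q, True), (PN p, True, PN (p @ [True]), True),
    (PN (p @ [True]), False, root_node (p @ [True, False]) R, False), (PN (p @ [True]), True, LN i, False)}"
  have X: "tree_edges p (Par Q (Tens R (Leaf (Bot i)))) = ?L \<union> B"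
    unfolding B_def by auto
  have parent: "(PN (p @ [True]), True, LN i, False) \<in> ?L"
    and nonleaf: "nonleaf (Par Q (Tens R (Leaf (Bot i))))"
    by (simp_all add: nonleaf_def)
  have "avoids B (PN (p @ [True]))"
    unfolding B_def avoids_Un by (intro conjI avoids_tree_edges; simp)
  from outer_edges_subset_ext_sw_edges[OF sub nonleaf labels X parent this]
  have "outer_edges P \<Gamma> p B s \<subseteq> ext_sw_edges P \<Gamma> s i" .
  moreover have "pnode P (p @ [False]) = root_node (p @ [False]) Q"
    using subtree_at_append[OF sub, of "[False]"] unfolding pnode_eq_node_at node_at_def
    by (cases Q) auto
  ultimately show ?thesis using side reach_mono by metis
qed

lemma switching_trees_bot_switch:
  fixes P Q R :: "('a, 'l) form"
  assumes sub: "subtree_at P p = Some (Par Q (Tens R (Leaf (Bot i))))"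
    and labels: "distinct (map lbl (leaves P))"
  shows "switching_trees (replace_at P p (Tens (Par Q R) (Leaf (Bot i)))) \<Gamma> \<Longrightarrow> switching_trees P \<Gamma>"
    and "switching_trees P \<Gamma> \<Longrightarrow> \<forall>s. \<not> reach (ext_sw_edges P \<Gamma> s i) (pnode P (p @ [False])) (LN i)
      \<Longrightarrow> switching_trees (replace_at P p (Tens (Par Q R) (Leaf (Bot i)))) \<Gamma>"
proof -
  define x :: "'l node" where "x = PN p"
  define y :: "'l node" where "y = PN (p @ [True])"
  define a where "a = root_node (p @ [False]) Q"
  define b where "b = root_node (p @ [True, False]) R"
  define B where "B = tree_edges (p @ [False]) Q \<union> tree_edges (p @ [True, False]) R"
  define Out where "Out = outer_edges P \<Gamma> p B"
  define V where "V = vertices P \<Gamma>"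
  have avoid: "avoids B x" "avoids B y"
    unfolding B_def x_def y_def avoids_Un by (intro conjI avoids_tree_edges; simp)+
  have "inside p a" "inside p b"
    unfolding a_def b_def using inside_root_node_append by (metis append_Cons append_Nil)+
  then have outer: "y \<notin> \<Union>(Out s)" "{x, a} \<notin> Out s" "{x, b} \<notin> Out s" "{x, LN i} \<notin> Out s" for s
    using outer_edges_fresh[of B p "[True]"] outer_edges_root[of B p] outer_edges_root[of B p "LN i"] avoid
    unfolding Out_def x_def y_def by (simp_all add: inside_def)
  have "i \<notin> lbl ` set (leaves Q)" "i \<notin> lbl ` set (leaves R)"
    using distinct_labels_subtree[OF labels sub] by auto
  then have dist: "x \<noteq> y" "a \<noteq> y" "b \<noteq> y" "LN i \<noteq> y" "x \<noteq> a" "x \<noteq> b" "x \<noteq> LN i" "a \<noteq> LN i" "b \<noteq> LN i"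
    using root_node_cases[of "p @ [False]" Q] root_node_cases[of "p @ [True, False]" R]
      root_node_LN[of "p @ [False]" Q] root_node_LN[of "p @ [True, False]" R]
    unfolding x_def y_def a_def b_def by auto
  have V: "x \<in> V" "a \<in> V" "b \<in> V"
    using root_node_in_vertices[OF sub] root_node_in_vertices[OF subtree_at_append[OF sub, THEN trans]]
    unfolding V_def x_def a_def b_def by auto
  then have V': "x \<in> V - {y}" "a \<in> V - {y}" using dist by auto
  have before: "switching_trees P \<Gamma> \<longleftrightarrow> (\<forall>s. spanning_tree (V - {y}) (insert {x, LN i} (insert {x, b} (Out s)))
      \<and> spanning_tree (V - {y}) (insert {x, a} (insert {b, LN i} (Out s))))"
    unfolding bot_switch_switchings(1)[OF sub, of \<Gamma>, folded x_def y_def a_def b_def B_def, folded Out_def V_def]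
    by (simp only: bot_switch_local_trees_before[OF outer dist(1-7,9) V(1,3)])
  have after: "switching_trees (replace_at P p (Tens (Par Q R) (Leaf (Bot i)))) \<Gamma>
      \<longleftrightarrow> (\<forall>s. spanning_tree (V - {y}) (insert {x, LN i} (insert {x, a} (Out s)))
        \<and> spanning_tree (V - {y}) (insert {x, LN i} (insert {x, b} (Out s))))"
    unfolding bot_switch_switchings(2)[OF sub, of \<Gamma>, folded x_def y_def a_def b_def B_def, folded Out_def V_def]
    by (simp only: bot_switch_local_trees_after[OF outer dist V(1)])
  show "switching_trees (replace_at P p (Tens (Par Q R) (Leaf (Bot i)))) \<Gamma> \<Longrightarrow> switching_trees P \<Gamma>"
    unfolding before after using bot_switch_backward_tree[OF _ _ outer(4,2) dist(8) V'(2,1)] by blast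
  assume "switching_trees P \<Gamma>" and "\<forall>s. \<not> reach (ext_sw_edges P \<Gamma> s i) (pnode P (p @ [False])) (LN i)"
  then have "\<not> reach (Out s) a (LN i)" for s
    using bot_switch_side_condition[OF sub labels] by (simp add: Out_def B_def a_def)
  with \<open>switching_trees P \<Gamma>\<close> show "switching_trees (replace_at P p (Tens (Par Q R) (Leaf (Bot i)))) \<Gamma>"
    unfolding before after using bot_switch_forward_tree[OF _ _ _ outer(2,3) dist(8,9,7) V'(2,1)] by blast
qed

section \<open>Invariance of correctness\<close>

lemma sim_step_switching_trees:
  assumes "sim_step \<Gamma> P P'" and labels: "distinct (map lbl (leaves P))"
  shows "switching_trees P' \<Gamma> \<longleftrightarrow> switching_trees P \<Gamma>"
  using assms(1)
proof cases
  case (par_comm p Q R)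
  then show ?thesis by (simp add: switching_trees_par_comm)
next
  case (par_assoc p Q R S)
  then show ?thesis by (simp add: switching_trees_par_assoc)
next
  case (tens_comm p Q R)
  then show ?thesis by (simp add: switching_trees_tens_comm)
next
  case (bot_assoc p i Q j)
  then show ?thesis by (simp add: switching_trees_bot_assoc[OF _ labels])
next
  case (bot_switch p Q R i)
  moreover from bot_switch(2) have "subtree_at P (p @ [False] @ []) \<noteq> None"
    using subtree_at_append[of P p _ "[False]"] by simp
  ultimately show ?thesis
    using switching_trees_bot_switch[OF bot_switch(2) labels] by (metis append_Nil2)
qed

lemma ppg_step_correct: "ppg_step G G' \<Longrightarrow> correct (fst G) (snd G) \<longleftrightarrow> correct (fst G') (snd G')"
  unfolding ppg_step_def correct_iff_switching_trees pre_proof_graph_def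
  by (auto split: prod.splits dest: sim_step_switching_trees)

theorem lemma1p7:
  fixes P P' :: "('a, 'l) form" and \<Gamma> :: "('a, 'l) form list"
  assumes "correct P \<Gamma>"
    and "sim (P, \<Gamma>) (P', \<Gamma>)"
  shows "correct P' \<Gamma>"
proof -
  have "correct (fst G) (snd G) \<longleftrightarrow> correct (fst G') (snd G')" if "sim G G'" for G G'
    using that unfolding sim_def by (induction rule: rtranclp_induct) (auto dest: ppg_step_correct)
  from this[OF assms(2)] assms(1) show ?thesis by simp
qed

end
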